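(* If $G$ is a countable group with exactly $2$ ends, then $G$ is finitely generated. Consequently $G$ contains an infinite cyclic subgroup of finite index.
   Context: For a countable group $G$ equipped with a proper left-invariant metric (balls finite, $d(gh_1,gh_2)=d(h_1,h_2)$), the number of ends of $G$ is the cardinality of $CF(G)\setminus G$, where for a proper metric space $X$, $CF(X)$ is the compactification induced by all continuous glacially oscillating functions $X\to[0,1]$. A glacial scale on $X$ is a sequence $\mathcal S=\{(K_i,n_i)\}_{i\ge1}$, $K_i$ bounded, $n_i\in\mathbb N$, such that for every bounded $K$ and $r>0$ there is $i$ with $K\subset K_i$, $n_i>r$; an $\mathcal S$-chain is a finite sequence $x_1,\dots,x_n$ with, for each $i\le n-1$, some $m$ with $x_i,x_{i+1}\notin K_m$ and $d(x_i,x_{i+1})\le n_m$; $f$ is glacially oscillating if for every $\epsilon>0$ there is a glacial scale $\mathcal S$ with $|f(x_1)-f(x_n)|<\epsilon$ for all $\mathcal S$-chains. Equivalently, the number of ends of an infinite $G$ is the supremum of $n$ such that $G$ contains $n$ pairwise disjoint infinite almost invariant subsets ($A$ is almost invariant if $A\,\Delta\,(A g)$ is finite for all $g\in G$). For finitely generated groups this agrees with the classical number of ends (of a Cayley graph). *)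

theory Defs
  imports "HOL-Analysis.Analysis" "HOL-Algebra.Coset" "HOL-Algebra.Generated_Groups"
begin

definition proper_metric_on :: "'a set \<Rightarrow> ('a \<Rightarrow> 'a \<Rightarrow> real) \<Rightarrow> bool" where
  "proper_metric_on X d \<longleftrightarrow>
     (\<forall>x\<in>X. \<forall>y\<in>X. 0 \<le> d x y \<and> (d x y = 0 \<longleftrightarrow> x = y) \<and> d x y = d y x) \<and>
     (\<forall>x\<in>X. \<forall>y\<in>X. \<forall>z\<in>X. d x z \<le> d x y + d y z) \<and>
     (\<forall>x\<in>X. \<forall>r. finite {y\<in>X. d x y \<le> r})"

definition left_invariant_metric :: "('a, 'b) monoid_scheme \<Rightarrow> ('a \<Rightarrow> 'a \<Rightarrow> real) \<Rightarrow> bool" where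
  "left_invariant_metric G d \<longleftrightarrow>
     (\<forall>g\<in>carrier G. \<forall>h1\<in>carrier G. \<forall>h2\<in>carrier G.
        d (g \<otimes>\<^bsub>G\<^esub> h1) (g \<otimes>\<^bsub>G\<^esub> h2) = d h1 h2)"

definition mbounded :: "'a set \<Rightarrow> ('a \<Rightarrow> 'a \<Rightarrow> real) \<Rightarrow> 'a set \<Rightarrow> bool" where
  "mbounded X d K \<longleftrightarrow> K \<subseteq> X \<and> (K = {} \<or> (\<exists>x\<in>X. \<exists>r. \<forall>y\<in>K. d x y \<le> r))"

definition glacial_scale :: "'a set \<Rightarrow> ('a \<Rightarrow> 'a \<Rightarrow> real) \<Rightarrow> (nat \<Rightarrow> 'a set \<times> nat) \<Rightarrow> bool" where
  "glacial_scale X d S \<longleftrightarrow>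
     (\<forall>i. mbounded X d (fst (S i))) \<and>
     (\<forall>K r. mbounded X d K \<and> r > 0 \<longrightarrow> (\<exists>i. K \<subseteq> fst (S i) \<and> real (snd (S i)) > r))"

definition scale_chain :: "'a set \<Rightarrow> ('a \<Rightarrow> 'a \<Rightarrow> real) \<Rightarrow> (nat \<Rightarrow> 'a set \<times> nat) \<Rightarrow> 'a list \<Rightarrow> bool" where
  "scale_chain X d S xs \<longleftrightarrow> xs \<noteq> [] \<and> set xs \<subseteq> X \<and>
     (\<forall>i. Suc i < length xs \<longrightarrow>
        (\<exists>m. xs ! i \<notin> fst (S m) \<and> xs ! Suc i \<notin> fst (S m) \<and>
             d (xs ! i) (xs ! Suc i) \<le> real (snd (S m))))"

definition glacially_oscillating :: "'a set \<Rightarrow> ('a \<Rightarrow> 'a \<Rightarrow> real) \<Rightarrow> ('a \<Rightarrow> real) \<Rightarrow> bool" where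
  "glacially_oscillating X d f \<longleftrightarrow>
     (\<forall>\<epsilon>>0. \<exists>S. glacial_scale X d S \<and>
        (\<forall>xs. scale_chain X d S xs \<longrightarrow> \<bar>f (hd xs) - f (last xs)\<bar> < \<epsilon>))"

definition mcontinuous_on :: "'a set \<Rightarrow> ('a \<Rightarrow> 'a \<Rightarrow> real) \<Rightarrow> ('a \<Rightarrow> real) \<Rightarrow> bool" where
  "mcontinuous_on X d f \<longleftrightarrow>
     (\<forall>x\<in>X. \<forall>\<epsilon>>0. \<exists>\<delta>>0. \<forall>y\<in>X. d x y < \<delta> \<longrightarrow> \<bar>f x - f y\<bar> < \<epsilon>)"

definition CGO :: "'a set \<Rightarrow> ('a \<Rightarrow> 'a \<Rightarrow> real) \<Rightarrow> ('a \<Rightarrow> real) set" where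
  "CGO X d = {f \<in> extensional X. f ` X \<subseteq> {0..1} \<and> mcontinuous_on X d f \<and> glacially_oscillating X d f}"

definition ev_embed :: "('a \<Rightarrow> real) set \<Rightarrow> 'a \<Rightarrow> (('a \<Rightarrow> real) \<Rightarrow> real)" where
  "ev_embed F x = restrict (\<lambda>f. f x) F"

definition CF :: "'a set \<Rightarrow> ('a \<Rightarrow> 'a \<Rightarrow> real) \<Rightarrow> (('a \<Rightarrow> real) \<Rightarrow> real) set" where
  "CF X d = (product_topology (\<lambda>f. top_of_set {0..1::real}) (CGO X d))
              closure_of (ev_embed (CGO X d) ` X)"

definition ends_set :: "'a set \<Rightarrow> ('a \<Rightarrow> 'a \<Rightarrow> real) \<Rightarrow> (('a \<Rightarrow> real) \<Rightarrow> real) set" where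
  "ends_set X d = CF X d - ev_embed (CGO X d) ` X"

end

(*
  Since G has two ends, there is an almost invariant set A with A and G - A infinite, and G has
  no three pairwise disjoint infinite almost invariant sets: the limit point of an infinite almost
  invariant set B in the compactification is an end where the characteristic function of B is 1
  and that of every disjoint almost invariant set is 0.

  If the ball of some radius r generates an infinite subgroup, the finite sets whose r-boundary
  lies in a fixed finite set have bounded size. Comparing A with a translate g A, where g moves a
  large finite part of G into A, then yields h with h A almost equal to A but of different size.
  The element t = h^-1 moves only finitely many points across the boundary of A, with nonzero
  net flux. Telescoping along a coset of <t> shows that all cosets carry the same flux, so t has
  infinite order and every coset meets the finite crossing set: <t> has finite index and G is
  generated by t and that set.

  If every ball generates a finite subgroup, the levels of the resulting exhaustion of G by finite
  subgroups split G into three disjoint infinite almost invariant sets, which is impossible.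
*)
theory Submission
  imports Defs "HOL-Algebra.Multiplicative_Group"
begin

section \<open>Almost equal sets\<close>

definition almost_equal :: "'a set \<Rightarrow> 'a set \<Rightarrow> bool" where
  "almost_equal P Q \<longleftrightarrow> finite (P - Q) \<and> finite (Q - P)"

text \<open>For almost equal sets, \<open>card_excess P Q\<close> plays the role of \<open>card P - card Q\<close>.\<close>
definition card_excess :: "'a set \<Rightarrow> 'a set \<Rightarrow> int" where
  "card_excess P Q = int (card (P - Q)) - int (card (Q - P))"

lemma card_excess_eq_card_Int_diff:
  assumes "finite U" "P - Q \<subseteq> U" "Q - P \<subseteq> U"
  shows "card_excess P Q = int (card (P \<inter> U)) - int (card (Q \<inter> U))"
proof -
  have P: "P \<inter> U = (P \<inter> Q \<inter> U) \<union> (P - Q)" and Q: "Q \<inter> U = (P \<inter> Q \<inter> U) \<union> (Q - P)"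
    using assms by blast+
  have "finite (P \<inter> Q \<inter> U)" "finite (P - Q)" "finite (Q - P)"
    using assms finite_subset by auto
  then have "card (P \<inter> U) = card (P \<inter> Q \<inter> U) + card (P - Q)"
    and "card (Q \<inter> U) = card (P \<inter> Q \<inter> U) + card (Q - P)"
    unfolding P Q by (auto intro: card_Un_disjoint)
  then show ?thesis unfolding card_excess_def by simp
qed

lemma almost_equal_trans: "almost_equal P Q \<Longrightarrow> almost_equal Q R \<Longrightarrow> almost_equal P R"
proof -
  have "P - R \<subseteq> (P - Q) \<union> (Q - R)" "R - P \<subseteq> (R - Q) \<union> (Q - P)" by blast+
  then show "almost_equal P Q \<Longrightarrow> almost_equal Q R \<Longrightarrow> almost_equal P R"
    unfolding almost_equal_def by (meson finite_Un finite_subset)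
qed

lemma card_excess_trans:
  assumes "almost_equal P Q" "almost_equal Q R"
  shows "card_excess P R = card_excess P Q + card_excess Q R"
proof -
  define U where "U = (P - Q) \<union> (Q - P) \<union> (Q - R) \<union> (R - Q)"
  have "finite U" using assms unfolding almost_equal_def U_def by auto
  have "card_excess P R = int (card (P \<inter> U)) - int (card (R \<inter> U))"
    and "card_excess P Q = int (card (P \<inter> U)) - int (card (Q \<inter> U))"
    and "card_excess Q R = int (card (Q \<inter> U)) - int (card (R \<inter> U))"
    by (rule card_excess_eq_card_Int_diff[OF \<open>finite U\<close>]; auto simp: U_def)+
  then show ?thesis by simp
qed

lemma almost_equal_Diff_Diff:
  "P \<subseteq> X \<Longrightarrow> Q \<subseteq> X \<Longrightarrow> almost_equal (X - P) (X - Q) \<longleftrightarrow> almost_equal P Q"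
proof -
  assume "P \<subseteq> X" "Q \<subseteq> X"
  then have "(X - P) - (X - Q) = Q - P" "(X - Q) - (X - P) = P - Q" by auto
  then show ?thesis unfolding almost_equal_def by auto
qed

lemma card_excess_Diff_Diff:
  "P \<subseteq> X \<Longrightarrow> Q \<subseteq> X \<Longrightarrow> card_excess (X - P) (X - Q) = - card_excess P Q"
proof -
  assume "P \<subseteq> X" "Q \<subseteq> X"
  then have "(X - P) - (X - Q) = Q - P" "(X - Q) - (X - P) = P - Q" by auto
  then show ?thesis unfolding card_excess_def by simp
qed

lemma
  assumes "inj_on f (P \<union> Q)"
  shows almost_equal_image: "almost_equal (f ` P) (f ` Q) \<longleftrightarrow> almost_equal P Q"
    and card_excess_image: "card_excess (f ` P) (f ` Q) = card_excess P Q"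
proof -
  have "f ` P - f ` Q = f ` (P - Q)" "f ` Q - f ` P = f ` (Q - P)"
    using assms unfolding inj_on_def by blast+
  moreover have "inj_on f (P - Q)" "inj_on f (Q - P)"
    using assms by (auto intro: inj_on_subset)
  ultimately show "almost_equal (f ` P) (f ` Q) \<longleftrightarrow> almost_equal P Q"
    and "card_excess (f ` P) (f ` Q) = card_excess P Q"
    unfolding almost_equal_def card_excess_def by (simp_all add: finite_image_iff card_image)
qed

lemma card_excess_le:
  assumes "finite (P - Q)" "card (P - Q) \<le> C" "finite (Q - P)" "S \<subseteq> Q - P"
  shows "card_excess P Q \<le> int C - int (card S)"
  using card_mono[OF assms(3,4)] assms(2) unfolding card_excess_def by linarith

lemma int_exists_change:
  fixes p :: "int \<Rightarrow> bool"
  assumes "a \<le> b" "p a \<noteq> p b"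
  shows "\<exists>k. a \<le> k \<and> k < b \<and> p k \<noteq> p (k + 1)"
proof (rule ccontr)
  assume "\<not> ?thesis"
  then have no_change: "p k = p (k + 1)" if "a \<le> k" "k < b" for k
    using that by blast
  have "k \<le> b \<longrightarrow> p k = p a" if "a \<le> k" for k
    using that
  proof (induction k rule: int_ge_induct)
    case (step i)
    then show ?case using no_change[of i] by simp
  qed simp
  from this[of b] show False using assms by simp
qed

lemma int_telescope:
  fixes f :: "int \<Rightarrow> 'b::ab_group_add"
  shows "(\<Sum>k\<in>{a..<a + int n}. f k - f (k + 1)) = f a - f (a + int n)"
proof (induction n)
  case (Suc n)
  have "{a..<a + int (Suc n)} = insert (a + int n) {a..<a + int n}" by auto
  then show ?case using Suc by (simp add: algebra_simps)
qed simp

lemma int_eventually_constant: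
  fixes p :: "int \<Rightarrow> bool"
  assumes "finite {k. p k \<noteq> p (k + 1)}"
  shows "\<exists>N. \<forall>k. N \<le> \<bar>k\<bar> \<longrightarrow> p k = (if 0 < k then p N else p (- N))"
proof -
  obtain M where M: "\<And>k. p k \<noteq> p (k + 1) \<Longrightarrow> \<bar>k\<bar> \<le> M"
    using assms unfolding finite_int_iff_bounded_le by blast
  define N where "N = max 1 (M + 1)"
  have no_change: "p i = p (i + 1)" if "M < \<bar>i\<bar>" for i
    using M[of i] that by linarith
  have up: "p k = p N" if "N \<le> k" for k
    using that
  proof (induction k rule: int_ge_induct)
    case (step i)
    then show ?case using no_change[of i] by (simp add: N_def)
  qed simp
  have down: "p k = p (- N)" if "k \<le> - N" for k
    using that
  proof (induction k rule: int_le_induct)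
    case (step i)
    then show ?case using no_change[of "i - 1"] by (simp add: N_def)
  qed simp
  have "p k = (if 0 < k then p N else p (- N))" if "N \<le> \<bar>k\<bar>" for k
    using that up[of k] down[of k] by (cases "0 < k") auto
  then show ?thesis by blast
qed

lemma infinite_nat_set_split3:
  fixes N :: "nat set"
  assumes "infinite N"
  obtains S1 S2 S3 where "S1 \<subseteq> N" "S2 \<subseteq> N" "S3 \<subseteq> N"
    "infinite S1" "infinite S2" "infinite S3" "S1 \<inter> S2 = {}" "S1 \<inter> S3 = {}" "S2 \<inter> S3 = {}"
proof -
  define S where "S i = enumerate N ` {j. j mod 3 = i}" for i :: nat
  have inj: "inj (enumerate N)"
    using strict_mono_enumerate[OF assms] by (rule strict_mono_imp_inj_on)
  have "S i \<subseteq> N" for i unfolding S_def using enumerate_in_set[OF assms] by blast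
  moreover have "infinite (S i)" if "i < 3" for i
  proof -
    have "infinite {j::nat. j mod 3 = i}"
      unfolding infinite_nat_iff_unbounded_le
    proof
      fix m show "\<exists>n\<ge>m. n \<in> {j. j mod 3 = i}"
        using that by (intro exI[of _ "3 * m + i"]) auto
    qed
    then show ?thesis unfolding S_def using inj by (simp add: finite_image_iff inj_on_subset)
  qed
  moreover have "S i \<inter> S i' = {}" if "i \<noteq> i'" for i i'
    unfolding S_def using inj that by (auto dest: injD)
  ultimately show thesis by (intro that[of "S 0" "S 1" "S 2"]) auto
qed

section \<open>Almost invariant sets\<close>

definition almost_invariant :: "('a, 'b) monoid_scheme \<Rightarrow> 'a set \<Rightarrow> bool" where
  "almost_invariant G A \<longleftrightarrow> A \<subseteq> carrier G \<and> (\<forall>h\<in>carrier G. almost_equal (A #>\<^bsub>G\<^esub> h) A)"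

definition jump_set :: "('a, 'b) monoid_scheme \<Rightarrow> 'a set \<Rightarrow> 'a \<Rightarrow> 'a set" where
  "jump_set G A h = {x \<in> carrier G. (x \<in> A) \<noteq> (x \<otimes>\<^bsub>G\<^esub> h \<in> A)}"

definition at_least_three_ends :: "('a, 'b) monoid_scheme \<Rightarrow> bool" where
  "at_least_three_ends G \<longleftrightarrow> (\<exists>A B C. almost_invariant G A \<and> almost_invariant G B \<and> almost_invariant G C
     \<and> infinite A \<and> infinite B \<and> infinite C \<and> A \<inter> B = {} \<and> A \<inter> C = {} \<and> B \<inter> C = {})"

lemma finite_if_not_at_least_three_ends:
  assumes "\<not> at_least_three_ends G"
    and "almost_invariant G A" "almost_invariant G B" "almost_invariant G C"
    and "infinite B" "infinite C" "A \<inter> B = {}" "A \<inter> C = {}" "B \<inter> C = {}"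
  shows "finite A"
  using assms unfolding at_least_three_ends_def by blast

context group
begin

lemma mem_r_coset_iff:
  "A \<subseteq> carrier G \<Longrightarrow> h \<in> carrier G \<Longrightarrow> x \<in> carrier G \<Longrightarrow> x \<in> A #> h \<longleftrightarrow> x \<otimes> inv h \<in> A"
  unfolding r_coset_def by (auto simp: m_assoc subsetD intro!: bexI[of _ "x \<otimes> inv h"])

lemma mem_l_coset_iff:
  "A \<subseteq> carrier G \<Longrightarrow> g \<in> carrier G \<Longrightarrow> x \<in> carrier G \<Longrightarrow> x \<in> g <# A \<longleftrightarrow> inv g \<otimes> x \<in> A"
  unfolding l_coset_def by (auto simp: m_assoc[symmetric] subsetD intro!: bexI[of _ "inv g \<otimes> x"])

lemma l_coset_eq_image: "g <# H = (\<lambda>h. g \<otimes> h) ` H"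
  unfolding l_coset_def by auto

lemma
  assumes "g \<in> carrier G" "H \<subseteq> carrier G"
  shows card_l_coset: "card (g <# H) = card H"
    and finite_l_coset_iff: "finite (g <# H) \<longleftrightarrow> finite H"
proof -
  have "inj_on (\<lambda>h. g \<otimes> h) H" using inj_on_cmult[OF assms(1)] assms(2) by (rule inj_on_subset)
  then show "card (g <# H) = card H" "finite (g <# H) \<longleftrightarrow> finite H"
    unfolding l_coset_eq_image by (simp_all add: card_image finite_image_iff)
qed

lemma l_coset_Diff:
  "g \<in> carrier G \<Longrightarrow> A \<subseteq> carrier G \<Longrightarrow> g <# (carrier G - A) = carrier G - (g <# A)"
  using mem_l_coset_iff[of A g] mem_l_coset_iff[of "carrier G - A" g] l_coset_subset_G[of A g]
    l_coset_subset_G[of "carrier G - A" g] by auto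

lemma
  assumes "g \<in> carrier G" "P \<subseteq> carrier G" "Q \<subseteq> carrier G"
  shows almost_equal_l_coset: "almost_equal (g <# P) (g <# Q) \<longleftrightarrow> almost_equal P Q"
    and card_excess_l_coset: "card_excess (g <# P) (g <# Q) = card_excess P Q"
proof -
  have "inj_on (\<lambda>x. g \<otimes> x) (P \<union> Q)"
    by (rule inj_on_subset[OF inj_on_cmult[OF assms(1)]]) (use assms(2,3) in auto)
  then show "almost_equal (g <# P) (g <# Q) \<longleftrightarrow> almost_equal P Q"
    and "card_excess (g <# P) (g <# Q) = card_excess P Q"
    unfolding l_coset_eq_image by (simp_all add: almost_equal_image card_excess_image)
qed


lemma
  assumes A: "A \<subseteq> carrier G" and g: "g1 \<in> carrier G" "g2 \<in> carrier G"
    and ae: "almost_equal (g1 <# (carrier G - A)) A" "almost_equal (g2 <# (carrier G - A)) A"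
  shows almost_equal_l_coset_mult: "almost_equal ((g2 \<otimes> g1) <# A) A"
    and card_excess_l_coset_mult: "card_excess ((g2 \<otimes> g1) <# A) A
      = card_excess (g2 <# (carrier G - A)) A - card_excess (g1 <# (carrier G - A)) A"
proof -
  let ?X = "carrier G"
  have g1A: "g1 <# A = ?X - (g1 <# (?X - A))" "g1 <# (?X - A) \<subseteq> ?X"
    using g(1) A l_coset_subset_G[of "?X - A" g1] l_coset_subset_G[OF A g(1)] by (auto simp: l_coset_Diff)
  have "almost_equal (g1 <# A) (?X - A)"
    "card_excess (g1 <# A) (?X - A) = - card_excess (g1 <# (?X - A)) A"
    unfolding g1A(1) using ae(1) A g1A(2) by (simp_all add: almost_equal_Diff_Diff card_excess_Diff_Diff)
  then have "almost_equal (g2 <# (g1 <# A)) (g2 <# (?X - A))"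
    "card_excess (g2 <# (g1 <# A)) (g2 <# (?X - A)) = - card_excess (g1 <# (?X - A)) A"
    using g(2) l_coset_subset_G[OF A g(1)] by (simp_all add: almost_equal_l_coset card_excess_l_coset)
  moreover have "g2 <# (g1 <# A) = (g2 \<otimes> g1) <# A" using A g(2) g(1) by (rule lcos_m_assoc)
  ultimately have ae12: "almost_equal ((g2 \<otimes> g1) <# A) (g2 <# (?X - A))"
    and ce12: "card_excess ((g2 \<otimes> g1) <# A) (g2 <# (?X - A)) = - card_excess (g1 <# (?X - A)) A"
    by simp_all
  show "almost_equal ((g2 \<otimes> g1) <# A) A" using ae12 ae(2) by (rule almost_equal_trans)
  show "card_excess ((g2 \<otimes> g1) <# A) A
      = card_excess (g2 <# (?X - A)) A - card_excess (g1 <# (?X - A)) A"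
    using card_excess_trans[OF ae12 ae(2)] ce12 by simp
qed

lemma jump_set_eq:
  assumes "A \<subseteq> carrier G" "h \<in> carrier G"
  shows "jump_set G A h = (A - (A #> inv h)) \<union> ((A #> inv h) - A)"
proof -
  have "A #> inv h \<subseteq> carrier G" using assms by (simp add: r_coset_subset_G)
  then show ?thesis
    using assms mem_r_coset_iff[of A "inv h"] unfolding jump_set_def by auto
qed

lemma almost_invariant_iff:
  "almost_invariant G A \<longleftrightarrow> A \<subseteq> carrier G \<and> (\<forall>h\<in>carrier G. finite (jump_set G A h))"
proof -
  have "almost_equal (A #> h) A \<longleftrightarrow> finite (jump_set G A (inv h))"
    if "A \<subseteq> carrier G" "h \<in> carrier G" for h
    using that jump_set_eq[of A "inv h"] unfolding almost_equal_def by auto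
  then show ?thesis
    unfolding almost_invariant_def by (metis inv_closed inv_inv)
qed

lemma almost_invariant_subset: "almost_invariant G A \<Longrightarrow> A \<subseteq> carrier G"
  unfolding almost_invariant_def by blast

lemma almost_invariant_Diff: "almost_invariant G A \<Longrightarrow> almost_invariant G (carrier G - A)"
proof -
  have "jump_set G (carrier G - A) h = jump_set G A h" if "h \<in> carrier G" for h
    using that unfolding jump_set_def by auto
  then show "almost_invariant G A \<Longrightarrow> almost_invariant G (carrier G - A)"
    unfolding almost_invariant_iff by auto
qed

lemma almost_invariant_Int:
  "almost_invariant G A \<Longrightarrow> almost_invariant G B \<Longrightarrow> almost_invariant G (A \<inter> B)"
proof -
  have "jump_set G (A \<inter> B) h \<subseteq> jump_set G A h \<union> jump_set G B h" for h
    unfolding jump_set_def by auto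
  then show "almost_invariant G A \<Longrightarrow> almost_invariant G B \<Longrightarrow> almost_invariant G (A \<inter> B)"
    unfolding almost_invariant_iff by (meson finite_Un finite_subset le_infI1)
qed

lemma almost_invariant_l_coset:
  assumes "g \<in> carrier G" "almost_invariant G A"
  shows "almost_invariant G (g <# A)"
proof -
  have A: "A \<subseteq> carrier G" using assms(2) by (rule almost_invariant_subset)
  have "jump_set G (g <# A) h \<subseteq> (\<lambda>y. g \<otimes> y) ` jump_set G A h" if "h \<in> carrier G" for h
  proof
    fix x assume x: "x \<in> jump_set G (g <# A) h"
    then have "x \<in> carrier G" unfolding jump_set_def by blast
    then have "x = g \<otimes> (inv g \<otimes> x)" and "inv g \<otimes> x \<in> jump_set G A h"
      using x that assms(1) A mem_l_coset_iff[of A g]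
      by (auto simp: jump_set_def m_assoc[symmetric])
    then show "x \<in> (\<lambda>y. g \<otimes> y) ` jump_set G A h" by blast
  qed
  then show ?thesis
    using assms A l_coset_subset_G unfolding almost_invariant_iff by (meson finite_imageI finite_subset)
qed

lemma almost_invariant_finite:
  assumes "finite A" "A \<subseteq> carrier G"
  shows "almost_invariant G A"
proof -
  have "jump_set G A h \<subseteq> A \<union> (\<lambda>a. a \<otimes> inv h) ` A" if "h \<in> carrier G" for h
  proof
    fix x assume x: "x \<in> jump_set G A h"
    show "x \<in> A \<union> (\<lambda>a. a \<otimes> inv h) ` A"
    proof (cases "x \<in> A")
      case False
      then have "x \<otimes> h \<in> A" "x = (x \<otimes> h) \<otimes> inv h"
        using x that unfolding jump_set_def by (auto simp: m_assoc)
      then show ?thesis by blast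
    qed simp
  qed
  then show ?thesis
    using assms unfolding almost_invariant_iff by (meson finite_Un finite_imageI finite_subset)
qed

lemma finite_translates_meeting_both:
  assumes "almost_invariant G A" "finite F" "F \<subseteq> carrier G"
  shows "finite {g \<in> carrier G. \<exists>f\<in>F. \<exists>f'\<in>F. g \<otimes> f \<in> A \<and> g \<otimes> f' \<notin> A}"
proof (rule finite_subset)
  show "{g \<in> carrier G. \<exists>f\<in>F. \<exists>f'\<in>F. g \<otimes> f \<in> A \<and> g \<otimes> f' \<notin> A}
        \<subseteq> (\<Union>f\<in>F. \<Union>f'\<in>F. (\<lambda>x. x \<otimes> inv f) ` jump_set G A (inv f \<otimes> f'))"
  proof safe
    fix g f f' assume g: "g \<in> carrier G" "f \<in> F" "f' \<in> F" "g \<otimes> f \<in> A" "g \<otimes> f' \<notin> A"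
    then have "f \<in> carrier G" "f' \<in> carrier G" using assms(3) by auto
    with g have "g \<otimes> f \<in> jump_set G A (inv f \<otimes> f')" and "g = (g \<otimes> f) \<otimes> inv f"
      by (auto simp: jump_set_def m_assoc[symmetric] m_assoc)
    with g show "g \<in> (\<Union>f\<in>F. \<Union>f'\<in>F. (\<lambda>x. x \<otimes> inv f) ` jump_set G A (inv f \<otimes> f'))"
      by blast
  qed
  show "finite (\<Union>f\<in>F. \<Union>f'\<in>F. (\<lambda>x. x \<otimes> inv f) ` jump_set G A (inv f \<otimes> f'))"
    using assms unfolding almost_invariant_iff by (auto simp: subsetD)
qed

lemma exists_translate_into:
  assumes "almost_invariant G A" "infinite A" "finite F" "F \<subseteq> carrier G"
  shows "\<exists>g\<in>A. g <# F \<subseteq> A"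
proof -
  let ?bad = "{g \<in> carrier G. \<exists>f\<in>insert \<one> F. \<exists>f'\<in>insert \<one> F. g \<otimes> f \<in> A \<and> g \<otimes> f' \<notin> A}"
  have "finite ?bad" using assms by (intro finite_translates_meeting_both) auto
  then obtain g where g: "g \<in> A" "g \<notin> ?bad"
    using assms(2) by (meson finite_subset subsetI)
  then have "g \<in> carrier G" using almost_invariant_subset[OF assms(1)] by blast
  with g have "g \<otimes> f \<in> A" if "f \<in> F" for f
    using that by force
  then show ?thesis using g(1) unfolding l_coset_def by blast
qed

end

section \<open>Translations with nonzero flux\<close>

locale nonzero_flux = group G for G :: "('a, 'b) monoid_scheme" (structure) +
  fixes A :: "'a set" and t :: 'a
  assumes almost_invariant_A: "almost_invariant G A"
    and t_closed [simp]: "t \<in> carrier G"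
    and almost_equal_shift: "almost_equal (inv t <# A) A"
    and card_excess_shift: "card_excess (inv t <# A) A \<noteq> 0"
begin

abbreviation T :: "'a set" where
  "T \<equiv> generate G {t}"

definition crossing :: "'a set" where
  "crossing = {z \<in> carrier G. (z \<in> A) \<noteq> (t \<otimes> z \<in> A)}"

definition flux :: "'a set \<Rightarrow> int" where
  "flux W = (\<Sum>z\<in>W. of_bool (z \<in> A) - of_bool (t \<otimes> z \<in> A))"

lemma A_subset: "A \<subseteq> carrier G"
  using almost_invariant_A by (rule almost_invariant_subset)

lemma crossing_eq: "crossing = (A - (inv t <# A)) \<union> ((inv t <# A) - A)"
proof -
  have "inv t <# A \<subseteq> carrier G" using A_subset by (simp add: l_coset_subset_G)
  then show ?thesis
    using A_subset mem_l_coset_iff[OF A_subset, of "inv t"] unfolding crossing_def by auto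
qed

lemma finite_crossing: "finite crossing"
  using almost_equal_shift unfolding crossing_eq almost_equal_def by simp

lemma flux_crossing: "flux crossing \<noteq> 0"
proof -
  let ?B = "inv t <# A"
  have B: "?B \<subseteq> carrier G" using A_subset by (simp add: l_coset_subset_G)
  have mem: "t \<otimes> z \<in> A \<longleftrightarrow> z \<in> ?B" if "z \<in> carrier G" for z
    using mem_l_coset_iff[OF A_subset, of "inv t" z] that by simp
  have fin: "finite (A - ?B)" "finite (?B - A)"
    using almost_equal_shift unfolding almost_equal_def by auto
  have "flux crossing = flux (A - ?B) + flux (?B - A)"
    unfolding flux_def crossing_eq by (rule sum.union_disjoint) (use fin in auto)
  also have "flux (A - ?B) = int (card (A - ?B))"
    unfolding flux_def using A_subset mem by (simp add: subset_iff)
  also have "flux (?B - A) = - int (card (?B - A))"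
    unfolding flux_def using B mem by (simp add: subset_iff)
  finally have "flux crossing = - card_excess ?B A"
    unfolding card_excess_def by simp
  then show ?thesis using card_excess_shift by simp
qed

lemma flux_Int_crossing:
  assumes "finite W" "W \<subseteq> carrier G"
  shows "flux W = flux (W \<inter> crossing)"
  unfolding flux_def
  by (rule sum.mono_neutral_right) (use assms in \<open>auto simp: crossing_def\<close>)

lemma flux_invariant:
  assumes "finite W" "W \<subseteq> carrier G" "t <# W = W"
  shows "flux W = 0"
proof -
  have "inj_on (\<lambda>z. t \<otimes> z) W"
    using inj_on_cmult[OF t_closed] assms(2) by (rule inj_on_subset)
  moreover note l_coset_eq_image[of t W]
  ultimately have "(\<Sum>z\<in>W. of_bool (t \<otimes> z \<in> A)) = (\<Sum>w\<in>t <# W. of_bool (w \<in> A) :: int)"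
    by (simp add: sum.reindex)
  then show ?thesis
    unfolding flux_def sum_subtractf using assms(3) by simp
qed

text \<open>If \<open>t\<close> had finite order, \<open>T <#> crossing\<close> would be a finite \<open>t\<close>-invariant set with nonzero flux.\<close>
lemma ord_t: "ord t = 0"
proof (rule ccontr)
  assume "ord t \<noteq> 0"
  then have "finite T"
    using finite_cyclic_subgroup_order[OF t_closed] by (simp add: carrier_subgroup_generated)
  have T: "subgroup T G" by (rule generate_is_subgroup) simp
  then have T_carrier: "T \<subseteq> carrier G" by (rule subgroup.subset)
  have "t \<in> T" by (rule generate.incl) simp
  have D: "crossing \<subseteq> carrier G" unfolding crossing_def by blast
  define W where "W = T <#> crossing"
  have "finite W"
    unfolding W_def set_mult_def using \<open>finite T\<close> finite_crossing by blast
  moreover have W: "W \<subseteq> carrier G" unfolding W_def using T_carrier D by (rule setmult_subset_G)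
  moreover have "t <# W = W"
  proof -
    have "t <# W = (t <# T) <#> crossing"
      unfolding W_def l_coset_eq_set_mult
      by (rule set_mult_assoc[symmetric]) (use T_carrier D in auto)
    also have "t <# T = T" using \<open>t \<in> T\<close> T by (intro coset_join3) auto
    finally show ?thesis unfolding W_def .
  qed
  ultimately have "flux W = 0" by (rule flux_invariant)
  moreover have "crossing \<subseteq> W"
  proof
    fix z assume "z \<in> crossing"
    then have "z = \<one> \<otimes> z" using D by auto
    then show "z \<in> W" unfolding W_def set_mult_def
      using \<open>z \<in> crossing\<close> subgroup.one_closed[OF T] by blast
  qed
  ultimately show False
    using flux_Int_crossing[OF \<open>finite W\<close> W] flux_crossing by (simp add: Int_absorb1)
qed

lemma inj_orbit: "y \<in> carrier G \<Longrightarrow> inj (\<lambda>k::int. t [^] k \<otimes> y)"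
  by (auto intro!: injI simp: int_pow_eq ord_t)

lemma T_eq: "T = range (\<lambda>k::int. t [^] k)"
  using generate_pow[OF t_closed] by auto

lemma infinite_T: "infinite T"
  using inj_orbit[of \<one>] unfolding T_eq by (simp add: finite_image_iff)

lemma r_coset_T: "y \<in> carrier G \<Longrightarrow> T #> y = range (\<lambda>k::int. t [^] k \<otimes> y)"
  unfolding T_eq r_coset_def by auto

lemma finite_orbit_differences:
  assumes "y \<in> carrier G" "z \<in> carrier G"
  shows "finite {k::int. (t [^] k \<otimes> y \<in> A) \<noteq> (t [^] k \<otimes> z \<in> A)}"
proof -
  let ?E = "{g \<in> carrier G. \<exists>f\<in>{y, z}. \<exists>f'\<in>{y, z}. g \<otimes> f \<in> A \<and> g \<otimes> f' \<notin> A}"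
  have "finite ?E" using assms by (intro finite_translates_meeting_both almost_invariant_A) auto
  then have "finite ((\<lambda>k::int. t [^] k) -` ?E)"
    using inj_orbit[of \<one>] by (intro finite_vimageI) simp_all
  then show ?thesis by (rule rev_finite_subset) auto
qed

lemma orbit_tails:
  obtains P Q where
    "\<And>y. y \<in> carrier G \<Longrightarrow> \<exists>N. \<forall>k::int. N \<le> \<bar>k\<bar> \<longrightarrow> (t [^] k \<otimes> y \<in> A) = (if 0 < k then P else Q)"
proof -
  have "finite {k::int. (t [^] k \<otimes> \<one> \<in> A) \<noteq> (t [^] k \<otimes> t \<in> A)}"
    by (rule finite_orbit_differences) simp_all
  moreover have "t [^] k \<otimes> t = t [^] (k + 1)" for k :: int
    using int_pow_mult[OF t_closed, of k 1] by simp
  ultimately have changes: "finite {k::int. (t [^] k \<in> A) \<noteq> (t [^] (k + 1) \<in> A)}"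
    by simp
  obtain N0 where N0: "\<forall>k::int. N0 \<le> \<bar>k\<bar> \<longrightarrow>
      (t [^] k \<in> A) = (if 0 < k then t [^] N0 \<in> A else t [^] (- N0) \<in> A)"
    using int_eventually_constant[OF changes] by blast
  show thesis
  proof (rule that)
    fix y assume y: "y \<in> carrier G"
    obtain M where M: "\<And>k::int. (t [^] k \<otimes> y \<in> A) \<noteq> (t [^] k \<otimes> \<one> \<in> A) \<Longrightarrow> \<bar>k\<bar> \<le> M"
      using finite_orbit_differences[OF y one_closed] unfolding finite_int_iff_bounded_le by blast
    have "(t [^] k \<otimes> y \<in> A) = (if 0 < k then t [^] N0 \<in> A else t [^] (- N0) \<in> A)"
      if k: "max N0 (M + 1) \<le> \<bar>k\<bar>" for k
    proof -
      have "\<not> \<bar>k\<bar> \<le> M" using k by simp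
      then have "(t [^] k \<otimes> y \<in> A) = (t [^] k \<in> A)" using M[of k] by auto
      then show ?thesis using k N0 by simp
    qed
    then show "\<exists>N. \<forall>k::int. N \<le> \<bar>k\<bar> \<longrightarrow>
        (t [^] k \<otimes> y \<in> A) = (if 0 < k then t [^] N0 \<in> A else t [^] (- N0) \<in> A)"
      by blast
  qed
qed

lemma orbit_flux:
  assumes y: "y \<in> carrier G"
    and tail: "\<forall>k::int. N \<le> \<bar>k\<bar> \<longrightarrow> (t [^] k \<otimes> y \<in> A) = (if 0 < k then P else Q)"
  shows "flux (crossing \<inter> (T #> y)) = of_bool Q - of_bool P"
proof -
  define orbit where "orbit k = t [^] k \<otimes> y" for k :: int
  define I where "I = orbit -` crossing"
  have inj: "inj orbit" unfolding orbit_def using inj_orbit[OF y] .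
  have step: "t \<otimes> orbit k = orbit (k + 1)" for k
    using int_pow_mult[OF t_closed, of 1 k] y by (simp add: orbit_def m_assoc add.commute)
  have "finite I" unfolding I_def using finite_crossing inj by (intro finite_vimageI)
  then obtain L where L: "\<And>k. k \<in> I \<Longrightarrow> \<bar>k\<bar> \<le> L"
    unfolding finite_int_iff_bounded_le by blast
  define L' where "L' = \<bar>L\<bar> + \<bar>N\<bar> + 1"
  define f where "f k = (of_bool (orbit k \<in> A) - of_bool (orbit (k + 1) \<in> A) :: int)" for k
  have "crossing \<inter> (T #> y) = orbit ` I"
    unfolding I_def r_coset_T[OF y] orbit_def by auto
  then have "flux (crossing \<inter> (T #> y)) = sum f I"
    unfolding flux_def f_def using inj by (simp add: sum.reindex inj_on_subset step)
  also have "\<dots> = sum f {- L'..<- L' + int (nat (2 * L'))}"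
  proof (rule sum.mono_neutral_left)
    show "I \<subseteq> {- L'..<- L' + int (nat (2 * L'))}"
      using L unfolding L'_def by force
    show "\<forall>k\<in>{- L'..<- L' + int (nat (2 * L'))} - I. f k = 0"
      unfolding I_def f_def crossing_def orbit_def using y step[unfolded orbit_def] by auto
  qed simp
  also have "\<dots> = of_bool (orbit (- L') \<in> A) - of_bool (orbit L' \<in> A)"
  proof -
    have "- L' + int (nat (2 * L')) = L'" by (simp add: L'_def)
    then show ?thesis
      using int_telescope[of "\<lambda>k. of_bool (orbit k \<in> A)" "- L'" "nat (2 * L')"]
      unfolding f_def by simp
  qed
  also have "\<dots> = of_bool Q - of_bool P"
  proof -
    have "N \<le> \<bar>L'\<bar>" "N \<le> \<bar>- L'\<bar>" "0 < L'" by (simp_all add: L'_def)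
    then show ?thesis
      using tail[rule_format, of L'] tail[rule_format, of "- L'"] unfolding orbit_def by simp
  qed
  finally show ?thesis .
qed

lemma orbit_meets_crossing:
  assumes y: "y \<in> carrier G" and "P \<noteq> Q"
    and tail: "\<forall>k::int. N \<le> \<bar>k\<bar> \<longrightarrow> (t [^] k \<otimes> y \<in> A) = (if 0 < k then P else Q)"
  shows "\<exists>k::int. t [^] k \<otimes> y \<in> crossing"
proof -
  define L where "L = \<bar>N\<bar> + 1"
  have "(t [^] (- L) \<otimes> y \<in> A) \<noteq> (t [^] L \<otimes> y \<in> A)"
    using tail \<open>P \<noteq> Q\<close> unfolding L_def by simp
  moreover have "- L \<le> L" by (simp add: L_def)
  ultimately have "\<exists>k\<ge>- L. k < L \<and> (t [^] k \<otimes> y \<in> A) \<noteq> (t [^] (k + 1) \<otimes> y \<in> A)"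
    using int_exists_change[of "- L" L "\<lambda>k. t [^] k \<otimes> y \<in> A"] by simp
  then obtain k where "- L \<le> k" "k < L" "(t [^] k \<otimes> y \<in> A) \<noteq> (t [^] (k + 1) \<otimes> y \<in> A)"
    by (elim exE conjE)
  moreover have "t \<otimes> (t [^] k \<otimes> y) = t [^] (k + 1) \<otimes> y"
    using int_pow_mult[OF t_closed, of 1 k] y by (simp add: m_assoc add.commute)
  ultimately show ?thesis unfolding crossing_def using y by (intro exI[of _ k]) auto
qed

text \<open>Grouping the flux by \<open>T\<close>-cosets: each coset contributes the same amount, which must therefore be nonzero.\<close>
lemma r_coset_meets_crossing:
  assumes y: "y \<in> carrier G"
  shows "\<exists>k::int. t [^] k \<otimes> y \<in> crossing"
proof -
  obtain P Q where tails:
    "\<And>y. y \<in> carrier G \<Longrightarrow> \<exists>N. \<forall>k::int. N \<le> \<bar>k\<bar> \<longrightarrow> (t [^] k \<otimes> y \<in> A) = (if 0 < k then P else Q)"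
    using orbit_tails by blast
  have T: "subgroup T G" by (rule generate_is_subgroup) simp
  have D: "crossing \<subseteq> carrier G" unfolding crossing_def by blast
  have "P \<noteq> Q"
  proof
    assume "P = Q"
    have "flux crossing = (\<Sum>C\<in>(\<lambda>z. T #> z) ` crossing. flux {x \<in> crossing. T #> x = C})"
      unfolding flux_def by (rule sum.group[symmetric]) (use finite_crossing in auto)
    also have "\<dots> = 0"
    proof (rule sum.neutral, safe)
      fix z assume z: "z \<in> crossing"
      then have "T #> x = T #> z \<longleftrightarrow> x \<in> T #> z" if "x \<in> carrier G" for x
        using repr_independence[of x T z] repr_independenceD[of T x z] that D T by auto
      then have "{x \<in> crossing. T #> x = T #> z} = crossing \<inter> (T #> z)"
        using D by auto
      moreover obtain N where "\<forall>k::int. N \<le> \<bar>k\<bar> \<longrightarrow> (t [^] k \<otimes> z \<in> A) = (if 0 < k then P else Q)"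
        using tails z D by blast
      then have "flux (crossing \<inter> (T #> z)) = of_bool Q - of_bool P"
        using z D by (intro orbit_flux) auto
      ultimately show "flux {x \<in> crossing. T #> x = T #> z} = 0"
        using \<open>P = Q\<close> by simp
    qed
    finally show False using flux_crossing by simp
  qed
  then show ?thesis using orbit_meets_crossing[OF y] tails[OF y] by blast
qed

lemma generate_insert_crossing: "generate G (insert t crossing) = carrier G"
proof
  have S: "insert t crossing \<subseteq> carrier G" unfolding crossing_def by auto
  then show "generate G (insert t crossing) \<subseteq> carrier G" using generate_in_carrier by blast
  show "carrier G \<subseteq> generate G (insert t crossing)"
  proof
    fix y assume y: "y \<in> carrier G"
    obtain k :: int where k: "t [^] k \<otimes> y \<in> crossing"
      using r_coset_meets_crossing[OF y] by blast
    interpret S: subgroup "generate G (insert t crossing)" G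
      using S by (rule generate_is_subgroup)
    have "t \<in> generate G (insert t crossing)" "t [^] k \<otimes> y \<in> generate G (insert t crossing)"
      using k by (auto intro: generate.incl)
    then have "inv (t [^] k) \<in> generate G (insert t crossing)"
      by (intro S.m_inv_closed subgroup_int_pow_closed[OF S.subgroup_axioms])
    then have "inv (t [^] k) \<otimes> (t [^] k \<otimes> y) \<in> generate G (insert t crossing)"
      using \<open>t [^] k \<otimes> y \<in> generate G (insert t crossing)\<close> by (rule S.m_closed)
    then show "y \<in> generate G (insert t crossing)"
      using y by (simp add: m_assoc[symmetric])
  qed
qed

lemma finite_rcosets_T: "finite (rcosets T)"
proof (rule finite_subset)
  have T: "subgroup T G" by (rule generate_is_subgroup) simp
  show "rcosets T \<subseteq> (\<lambda>z. T #> z) ` crossing"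
  proof
    fix C assume "C \<in> rcosets T"
    then obtain y where y: "y \<in> carrier G" "C = T #> y" unfolding RCOSETS_def by blast
    obtain k :: int where k: "t [^] k \<otimes> y \<in> crossing"
      using r_coset_meets_crossing[OF y(1)] by blast
    have "t [^] k \<otimes> y \<in> T #> y"
      unfolding r_coset_T[OF y(1)] by blast
    then have "C = T #> (t [^] k \<otimes> y)"
      using repr_independence y T by blast
    then show "C \<in> (\<lambda>z. T #> z) ` crossing" using k by blast
  qed
  show "finite ((\<lambda>z. T #> z) ` crossing)" using finite_crossing by simp
qed

theorem finitely_generated_and_virtually_cyclic:
  "(\<exists>S. finite S \<and> S \<subseteq> carrier G \<and> generate G S = carrier G)
   \<and> (\<exists>a\<in>carrier G. infinite (generate G {a}) \<and> finite (rcosets (generate G {a})))"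
proof
  show "\<exists>S. finite S \<and> S \<subseteq> carrier G \<and> generate G S = carrier G"
  proof (intro exI conjI)
    show "finite (insert t crossing)" using finite_crossing by simp
    show "insert t crossing \<subseteq> carrier G" unfolding crossing_def by auto
    show "generate G (insert t crossing) = carrier G" by (rule generate_insert_crossing)
  qed
  show "\<exists>a\<in>carrier G. infinite (generate G {a}) \<and> finite (rcosets (generate G {a}))"
    using infinite_T finite_rcosets_T t_closed by blast
qed

end

section \<open>Groups with a proper left-invariant metric\<close>

locale metric_group = group G for G :: "('a, 'b) monoid_scheme" (structure) +
  fixes d :: "'a \<Rightarrow> 'a \<Rightarrow> real"
  assumes proper: "proper_metric_on (carrier G) d"
    and left_invariant: "left_invariant_metric G d"
begin

lemma dist_commute: "x \<in> carrier G \<Longrightarrow> y \<in> carrier G \<Longrightarrow> d x y = d y x"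
  using proper unfolding proper_metric_on_def by blast

lemma dist_nonneg: "x \<in> carrier G \<Longrightarrow> y \<in> carrier G \<Longrightarrow> 0 \<le> d x y"
  using proper unfolding proper_metric_on_def by blast

lemma dist_eq_0_iff: "x \<in> carrier G \<Longrightarrow> y \<in> carrier G \<Longrightarrow> d x y = 0 \<longleftrightarrow> x = y"
  using proper unfolding proper_metric_on_def by blast

lemma finite_ball: "x \<in> carrier G \<Longrightarrow> finite {y \<in> carrier G. d x y \<le> r}"
  using proper unfolding proper_metric_on_def by blast

lemma dist_mult_left:
  "g \<in> carrier G \<Longrightarrow> x \<in> carrier G \<Longrightarrow> y \<in> carrier G \<Longrightarrow> d (g \<otimes> x) (g \<otimes> y) = d x y"
  using left_invariant unfolding left_invariant_metric_def by blast

lemma dist_mult_right: "x \<in> carrier G \<Longrightarrow> h \<in> carrier G \<Longrightarrow> d x (x \<otimes> h) = d \<one> h"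
  using dist_mult_left[of x \<one> h] by simp

lemma dist_one_inv: "s \<in> carrier G \<Longrightarrow> d \<one> (inv s) = d \<one> s"
  using dist_mult_left[of s \<one> "inv s"] dist_commute[of s \<one>] by simp

definition boundary_layer :: "real \<Rightarrow> 'a set \<Rightarrow> 'a set" where
  "boundary_layer r Z = {x \<in> Z. \<exists>y\<in>carrier G - Z. d x y \<le> r}"

lemma finite_boundary_layer:
  assumes "almost_invariant G Z"
  shows "finite (boundary_layer r Z)"
proof (rule finite_subset)
  have Z: "Z \<subseteq> carrier G" using assms by (rule almost_invariant_subset)
  show "boundary_layer r Z \<subseteq> (\<Union>s\<in>{s \<in> carrier G. d \<one> s \<le> r}. jump_set G Z s)"
  proof
    fix x assume "x \<in> boundary_layer r Z"
    then obtain y where xy: "x \<in> Z" "y \<in> carrier G - Z" "d x y \<le> r"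
      unfolding boundary_layer_def by blast
    then have x: "x \<in> carrier G" using Z by blast
    define s where "s = inv x \<otimes> y"
    have s: "s \<in> carrier G" "y = x \<otimes> s"
      using x xy unfolding s_def by (auto simp: m_assoc[symmetric])
    then have "d \<one> s \<le> r" "x \<in> jump_set G Z s"
      using dist_mult_right[OF x s(1)] xy x unfolding jump_set_def by auto
    with s show "x \<in> (\<Union>s\<in>{s \<in> carrier G. d \<one> s \<le> r}. jump_set G Z s)" by blast
  qed
  show "finite (\<Union>s\<in>{s \<in> carrier G. d \<one> s \<le> r}. jump_set G Z s)"
    using finite_ball[of \<one> r] assms unfolding almost_invariant_iff by auto
qed

definition ball_subgroup :: "real \<Rightarrow> 'a set" where
  "ball_subgroup r = generate G {s \<in> carrier G. d \<one> s \<le> r}"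

lemma subgroup_ball_subgroup: "subgroup (ball_subgroup r) G"
  unfolding ball_subgroup_def by (rule generate_is_subgroup) auto

lemma ball_subgroup_subset: "ball_subgroup r \<subseteq> carrier G"
  using subgroup_ball_subgroup by (rule subgroup.subset)

lemma ball_subgroup_mono: "r \<le> s \<Longrightarrow> ball_subgroup r \<subseteq> ball_subgroup s"
  unfolding ball_subgroup_def by (rule mono_generate) auto

definition outside_step :: "'a set \<Rightarrow> real \<Rightarrow> 'a \<Rightarrow> 'a \<Rightarrow> bool" where
  "outside_step E r u v \<longleftrightarrow> u \<in> carrier G - E \<and> v \<in> carrier G - E \<and> d u v \<le> r"

definition outside_component :: "'a set \<Rightarrow> real \<Rightarrow> 'a \<Rightarrow> 'a set" where
  "outside_component E r u = {v. (outside_step E r)\<^sup>*\<^sup>* u v}"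

lemma outside_component_sym:
  "v \<in> outside_component E r u \<Longrightarrow> u \<in> outside_component E r v"
proof -
  have "symp (outside_step E r)"
    unfolding outside_step_def by (auto intro!: sympI simp: dist_commute)
  then show "v \<in> outside_component E r u \<Longrightarrow> u \<in> outside_component E r v"
    unfolding outside_component_def using symp_rtranclp by (auto dest: sympD)
qed

lemma outside_component_trans:
  "v \<in> outside_component E r u \<Longrightarrow> w \<in> outside_component E r v \<Longrightarrow> w \<in> outside_component E r u"
  unfolding outside_component_def by simp

lemma outside_component_subset:
  assumes "u \<in> carrier G - E"
  shows "outside_component E r u \<subseteq> carrier G - E"
proof
  fix v assume "v \<in> outside_component E r u"
  then have "(outside_step E r)\<^sup>*\<^sup>* u v" unfolding outside_component_def by simp
  then show "v \<in> carrier G - E"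
    by (induction rule: rtranclp_induct) (use assms in \<open>auto simp: outside_step_def\<close>)
qed

lemma outside_component_mult_closed:
  assumes far: "\<And>v e. v \<in> outside_component E r u \<Longrightarrow> e \<in> E \<Longrightarrow> r < d v e"
    and v: "v \<in> outside_component E r u" and u: "u \<in> carrier G - E"
    and s: "s \<in> carrier G" "d \<one> s \<le> r"
  shows "v \<otimes> s \<in> outside_component E r u"
proof -
  have v': "v \<in> carrier G - E" using v outside_component_subset[OF u] by blast
  then have vs: "v \<otimes> s \<in> carrier G" "d v (v \<otimes> s) \<le> r"
    using s dist_mult_right[of v s] by auto
  have "v \<otimes> s \<notin> E"
  proof
    assume "v \<otimes> s \<in> E"
    then have "r < d v (v \<otimes> s)" by (rule far[OF v])
    with vs(2) show False by simp
  qed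
  with v' vs have "outside_step E r v (v \<otimes> s)" unfolding outside_step_def by simp
  moreover have "(outside_step E r)\<^sup>*\<^sup>* u v" using v unfolding outside_component_def by simp
  ultimately show ?thesis
    unfolding outside_component_def by (simp add: rtranclp.rtrancl_into_rtrancl)
qed

text \<open>It suffices that the component is closed under right multiplication by the generators.\<close>
lemma l_coset_ball_subgroup_subset_component:
  assumes u: "u \<in> carrier G - E"
    and far: "\<And>v e. v \<in> outside_component E r u \<Longrightarrow> e \<in> E \<Longrightarrow> r < d v e"
  shows "u <# ball_subgroup r \<subseteq> outside_component E r u"
proof -
  let ?comp = "outside_component E r u"
  have step: "v \<otimes> s \<in> ?comp" if "v \<in> ?comp" "s \<in> carrier G" "d \<one> s \<le> r" for v s
    by (rule outside_component_mult_closed[OF far that(1) u that(2,3)])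
  have "\<forall>v\<in>?comp. v \<otimes> k \<in> ?comp" if "k \<in> ball_subgroup r" for k
    using that unfolding ball_subgroup_def
  proof (induction rule: generate.induct)
    case one
    then show ?case using outside_component_subset[OF u, of r] by auto
  next
    case (incl s)
    then show ?case using step by blast
  next
    case (inv s)
    then have s: "s \<in> carrier G" "d \<one> (inv s) \<le> r" by (auto simp: dist_one_inv)
    show ?case
    proof
      fix v assume "v \<in> ?comp"
      then show "v \<otimes> inv s \<in> ?comp" by (rule step[OF _ inv_closed[OF s(1)] s(2)])
    qed
  next
    case (eng h1 h2)
    show ?case
    proof
      fix v assume v: "v \<in> ?comp"
      have gens: "{s \<in> carrier G. d \<one> s \<le> r} \<subseteq> carrier G" by blast
      have "h1 \<in> carrier G" "h2 \<in> carrier G" "v \<in> carrier G"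
        using generate_in_carrier[OF gens eng.hyps(1)] generate_in_carrier[OF gens eng.hyps(2)]
          v outside_component_subset[OF u] by blast+
      then have "v \<otimes> (h1 \<otimes> h2) = (v \<otimes> h1) \<otimes> h2" by (simp add: m_assoc)
      moreover have "(v \<otimes> h1) \<otimes> h2 \<in> ?comp" using eng.IH v by blast
      ultimately show "v \<otimes> (h1 \<otimes> h2) \<in> ?comp" by simp
    qed
  qed
  moreover have "u \<in> ?comp" unfolding outside_component_def by simp
  ultimately show ?thesis unfolding l_coset_eq_image by blast
qed

lemma outside_component_subset_if_boundary:
  assumes "Y \<subseteq> carrier G" "boundary_layer r Y \<subseteq> E" "u \<in> Y - E"
  shows "outside_component E r u \<subseteq> Y"
proof
  fix v assume "v \<in> outside_component E r u"
  then have "(outside_step E r)\<^sup>*\<^sup>* u v" unfolding outside_component_def by simp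
  then show "v \<in> Y"
  proof (induction rule: rtranclp_induct)
    case (step v w)
    then show ?case
      using assms(2) unfolding outside_step_def boundary_layer_def by blast
  qed (use assms in blast)
qed

text \<open>A component staying away from \<open>E\<close> would contain a coset of the infinite \<open>ball_subgroup r\<close>.\<close>
lemma subset_finite_outside_components:
  assumes "infinite (ball_subgroup r)"
    and Y: "finite Y" "Y \<subseteq> carrier G" "boundary_layer r Y \<subseteq> E"
  shows "Y \<subseteq> E \<union> (\<Union>n\<in>{n \<in> carrier G - E. (\<exists>e\<in>E. d n e \<le> r) \<and> finite (outside_component E r n)}.
      outside_component E r n)"
proof
  let ?comp = "outside_component E r"
  fix x assume x: "x \<in> Y"
  show "x \<in> E \<union> (\<Union>n\<in>{n \<in> carrier G - E. (\<exists>e\<in>E. d n e \<le> r) \<and> finite (?comp n)}. ?comp n)"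
  proof (cases "x \<in> E")
    case False
    then have x': "x \<in> carrier G - E" using x Y(2) by blast
    have "?comp x \<subseteq> Y" using Y(2,3) x False by (intro outside_component_subset_if_boundary) auto
    then have fin: "finite (?comp x)" using Y(1) by (rule finite_subset)
    obtain n e where n: "n \<in> ?comp x" "e \<in> E" "d n e \<le> r"
    proof (rule ccontr)
      assume "\<not> thesis"
      then have "\<And>v e. v \<in> ?comp x \<Longrightarrow> e \<in> E \<Longrightarrow> r < d v e"
        using that by force
      then have "x <# ball_subgroup r \<subseteq> ?comp x"
        by (rule l_coset_ball_subgroup_subset_component[OF x'])
      moreover have "infinite (x <# ball_subgroup r)"
        using assms(1) x' ball_subgroup_subset by (simp add: finite_l_coset_iff)
      ultimately show False using fin finite_subset by blast
    qed
    have "?comp n \<subseteq> ?comp x" using n(1) outside_component_trans by blast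
    then have "finite (?comp n)" using fin finite_subset by blast
    moreover have "n \<in> carrier G - E" using n(1) outside_component_subset[OF x'] by blast
    moreover have "x \<in> ?comp n" using n(1) by (rule outside_component_sym)
    ultimately show ?thesis using n(2,3) by blast
  qed simp
qed

lemma card_le_if_boundary_layer_subset:
  assumes "infinite (ball_subgroup r)" "finite E" "E \<subseteq> carrier G"
  shows "\<exists>C. \<forall>Y. finite Y \<longrightarrow> Y \<subseteq> carrier G \<longrightarrow> boundary_layer r Y \<subseteq> E \<longrightarrow> card Y \<le> C"
proof -
  let ?comp = "outside_component E r"
  define reps where "reps = {n \<in> carrier G - E. (\<exists>e\<in>E. d n e \<le> r) \<and> finite (?comp n)}"
  have "finite reps"
  proof (rule finite_subset)
    show "reps \<subseteq> (\<Union>e\<in>E. {v \<in> carrier G. d e v \<le> r})"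
      unfolding reps_def using assms(3) dist_commute by fastforce
    show "finite (\<Union>e\<in>E. {v \<in> carrier G. d e v \<le> r})"
      using assms(2,3) finite_ball by blast
  qed
  have "card Y \<le> card E + (\<Sum>n\<in>reps. card (?comp n))"
    if Y: "finite Y" "Y \<subseteq> carrier G" "boundary_layer r Y \<subseteq> E" for Y
  proof -
    have "Y \<subseteq> E \<union> (\<Union>n\<in>reps. ?comp n)"
      unfolding reps_def using assms(1) Y by (rule subset_finite_outside_components)
    moreover have "finite (\<Union>n\<in>reps. ?comp n)" using \<open>finite reps\<close> unfolding reps_def by blast
    ultimately have "card Y \<le> card (E \<union> (\<Union>n\<in>reps. ?comp n))"
      using assms(2) by (intro card_mono) auto
    also have "\<dots> \<le> card E + card (\<Union>n\<in>reps. ?comp n)" by (rule card_Un_le)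
    also have "card (\<Union>n\<in>reps. ?comp n) \<le> (\<Sum>n\<in>reps. card (?comp n))"
      using \<open>finite reps\<close> by (rule card_UN_le)
    finally show ?thesis by simp
  qed
  then show ?thesis by blast
qed

lemma boundary_layer_Int_l_coset:
  assumes "A \<subseteq> carrier G" "B \<subseteq> carrier G" "g \<in> carrier G" "g <# boundary_layer r B \<subseteq> A"
  shows "boundary_layer r ((carrier G - A) \<inter> (g <# B)) \<subseteq> boundary_layer r (carrier G - A)"
proof
  fix x assume "x \<in> boundary_layer r ((carrier G - A) \<inter> (g <# B))"
  then obtain y where x: "x \<in> carrier G - A" "x \<in> g <# B"
    and y: "y \<in> carrier G" "y \<notin> (carrier G - A) \<inter> (g <# B)" "d x y \<le> r"
    unfolding boundary_layer_def by blast
  show "x \<in> boundary_layer r (carrier G - A)"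
  proof (cases "y \<in> A")
    case True
    then show ?thesis using x y unfolding boundary_layer_def by blast
  next
    case False
    then have "y \<notin> g <# B" using y by blast
    then have "inv g \<otimes> x \<in> B" "inv g \<otimes> y \<in> carrier G - B"
      using x y assms(2,3) mem_l_coset_iff[of B g] by auto
    moreover have "d (inv g \<otimes> x) (inv g \<otimes> y) \<le> r"
      using dist_mult_left[of "inv g" x y] x y assms(3) by simp
    ultimately have "inv g \<otimes> x \<in> boundary_layer r B" unfolding boundary_layer_def by blast
    then have "g \<otimes> (inv g \<otimes> x) \<in> A" using assms(4) unfolding l_coset_eq_image by blast
    then show ?thesis using x assms(3) by (simp add: m_assoc[symmetric])
  qed
qed

lemma card_excess_l_coset_le:
  assumes three: "\<not> at_least_three_ends G"
    and A: "almost_invariant G A" and B: "almost_invariant G B" "infinite B"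
    and g: "g \<in> carrier G" and F: "F \<subseteq> carrier G - B" "g <# F \<subseteq> A"
    and inside: "finite ((carrier G - A) \<inter> (g <# B))" "card ((carrier G - A) \<inter> (g <# B)) \<le> C"
    and outside: "infinite ((carrier G - A) - (g <# B))"
  shows "almost_equal (g <# B) A \<and> card_excess (g <# B) A \<le> int C - int (card F)"
proof -
  let ?X = "carrier G" and ?V = "g <# B"
  have BX: "B \<subseteq> ?X" using B(1) by (rule almost_invariant_subset)
  have AX: "A \<subseteq> ?X" using A by (rule almost_invariant_subset)
  have V: "almost_invariant G ?V" using g B(1) by (rule almost_invariant_l_coset)
  then have V': "almost_invariant G (?X - ?V)" by (rule almost_invariant_Diff)
  have VX: "?V \<subseteq> ?X" using V by (rule almost_invariant_subset)
  have "finite (A - ?V)"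
  proof -
    have "A - ?V = A \<inter> (?X - ?V)" "(?X - A) - ?V = (?X - A) \<inter> (?X - ?V)" using AX by blast+
    then have "almost_invariant G (A - ?V)" "almost_invariant G ((?X - A) - ?V)"
      using almost_invariant_Int[OF A V'] almost_invariant_Int[OF almost_invariant_Diff[OF A] V'] by simp_all
    moreover have "infinite ?V" using g BX B(2) by (simp add: finite_l_coset_iff)
    ultimately show ?thesis
      using finite_if_not_at_least_three_ends[OF three _ _ V outside] by blast
  qed
  moreover have "g <# F \<subseteq> A - ?V"
  proof -
    have "g <# F \<subseteq> g <# (?X - B)" using F(1) unfolding l_coset_eq_image by blast
    then show ?thesis using F(2) g BX by (auto simp: l_coset_Diff)
  qed
  moreover have "card (g <# F) = card F" using F(1) by (intro card_l_coset[OF g]) auto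
  moreover have "?V - A = (?X - A) \<inter> ?V" using VX by blast
  ultimately show ?thesis
    using inside card_excess_le[of ?V A C "g <# F"] unfolding almost_equal_def by auto
qed

lemma exists_translate_card_excess_le:
  assumes three: "\<not> at_least_three_ends G"
    and A: "almost_invariant G A" "infinite A" "infinite (carrier G - A)"
    and bound: "\<And>Y. finite Y \<Longrightarrow> Y \<subseteq> carrier G \<Longrightarrow>
      boundary_layer r Y \<subseteq> boundary_layer r (carrier G - A) \<Longrightarrow> card Y \<le> C"
  shows "\<exists>g\<in>carrier G. (almost_equal (g <# A) A \<and> card_excess (g <# A) A < 0)
    \<or> (almost_equal (g <# (carrier G - A)) A \<and> card_excess (g <# (carrier G - A)) A \<le> int C - int m)"
proof -
  let ?X = "carrier G"
  have AX: "A \<subseteq> ?X" using A(1) by (rule almost_invariant_subset)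
  have A': "almost_invariant G (?X - A)" using A(1) by (rule almost_invariant_Diff)
  obtain Fa where Fa: "Fa \<subseteq> A" "finite Fa" "card Fa = m"
    using infinite_arbitrarily_large[OF A(2)] by blast
  obtain Fb where Fb: "Fb \<subseteq> ?X - A" "finite Fb" "card Fb = Suc C"
    using infinite_arbitrarily_large[OF A(3)] by blast
  define F where "F = boundary_layer r A \<union> boundary_layer r (?X - A) \<union> Fa \<union> Fb"
  have "finite F" "F \<subseteq> ?X"
    unfolding F_def using finite_boundary_layer[OF A(1)] finite_boundary_layer[OF A'] Fa Fb AX
    by (auto simp: boundary_layer_def)
  then obtain g where g: "g \<in> A" "g <# F \<subseteq> A" using exists_translate_into[OF A(1,2)] by blast
  have gX: "g \<in> ?X" using g(1) AX by blast
  have into: "g <# K \<subseteq> A" if "K \<subseteq> F" for K using g(2) that unfolding l_coset_eq_image by blast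
  define Y where "Y = (?X - A) \<inter> (g <# A)"
  define Z where "Z = (?X - A) \<inter> (g <# (?X - A))"
  have Z_eq: "Z = (?X - A) - (g <# A)" and Y_eq: "Y = (?X - A) - (g <# (?X - A))"
    unfolding Y_def Z_def using gX AX l_coset_subset_G[OF AX gX] by (auto simp: l_coset_Diff)
  have bY: "boundary_layer r Y \<subseteq> boundary_layer r (?X - A)"
    unfolding Y_def by (rule boundary_layer_Int_l_coset) (use AX gX into F_def in auto)
  have bZ: "boundary_layer r Z \<subseteq> boundary_layer r (?X - A)"
    unfolding Z_def by (rule boundary_layer_Int_l_coset) (use AX gX into F_def in auto)
  have "almost_invariant G Y" "almost_invariant G Z"
    unfolding Y_def Z_def using A' A(1) gX by (auto intro: almost_invariant_Int almost_invariant_l_coset)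
  moreover have "A \<inter> Y = {}" "A \<inter> Z = {}" "Y \<inter> Z = {}" unfolding Y_def Z_eq by auto
  ultimately have "finite Y \<or> finite Z"
    using finite_if_not_at_least_three_ends[OF three A(1)] A(2) by blast
  moreover have "Y \<union> Z = ?X - A" unfolding Y_def Z_eq by blast
  ultimately consider "finite Y" "infinite Z" | "finite Z" "infinite Y"
    using A(3) by (metis finite_Un)
  then show ?thesis
  proof cases
    case 1
    have "almost_equal (g <# A) A \<and> card_excess (g <# A) A \<le> int C - int (card Fb)"
      using 1 bound[OF 1(1) _ bY] into[of Fb] Fb(1) unfolding Y_def Z_eq
      by (intro card_excess_l_coset_le[OF three A(1) A(1) A(2) gX]) (auto simp: F_def)
    then show ?thesis using Fb(3) gX by auto
  next
    case 2
    have "?X - (?X - A) = A" using AX by blast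
    then have "almost_equal (g <# (?X - A)) A \<and> card_excess (g <# (?X - A)) A \<le> int C - int (card Fa)"
      using 2 bound[OF 2(1) _ bZ] into[of Fa] Fa(1) unfolding Z_def Y_eq
      by (intro card_excess_l_coset_le[OF three A(1) A' A(3) gX]) (auto simp: F_def)
    then show ?thesis using Fa(3) gX by auto
  qed
qed

lemma exists_translate_card_excess_nonzero:
  assumes three: "\<not> at_least_three_ends G"
    and A: "almost_invariant G A" "infinite A" "infinite (carrier G - A)"
    and ball: "infinite (ball_subgroup r)"
  shows "\<exists>h\<in>carrier G. almost_equal (h <# A) A \<and> card_excess (h <# A) A \<noteq> 0"
proof -
  let ?X = "carrier G"
  have AX: "A \<subseteq> ?X" using A(1) by (rule almost_invariant_subset)
  have "finite (boundary_layer r (?X - A))" "boundary_layer r (?X - A) \<subseteq> ?X"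
    using finite_boundary_layer[OF almost_invariant_Diff[OF A(1)]] unfolding boundary_layer_def by auto
  then obtain C where "\<And>Y. finite Y \<Longrightarrow> Y \<subseteq> ?X \<Longrightarrow>
      boundary_layer r Y \<subseteq> boundary_layer r (?X - A) \<Longrightarrow> card Y \<le> C"
    using card_le_if_boundary_layer_subset[OF ball] by blast
  note translate = exists_translate_card_excess_le[OF three A this]
  obtain g1 where g1: "g1 \<in> ?X" "(almost_equal (g1 <# A) A \<and> card_excess (g1 <# A) A < 0)
      \<or> (almost_equal (g1 <# (?X - A)) A \<and> card_excess (g1 <# (?X - A)) A \<le> int C - int 0)"
    using translate by blast
  show ?thesis
  proof (cases "almost_equal (g1 <# A) A \<and> card_excess (g1 <# A) A < 0")
    case True
    then show ?thesis using g1(1) by force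
  next
    case False
    then have h1: "almost_equal (g1 <# (?X - A)) A" using g1(2) by blast
    define v where "v = card_excess (g1 <# (?X - A)) A"
    obtain g2 where g2: "g2 \<in> ?X" "(almost_equal (g2 <# A) A \<and> card_excess (g2 <# A) A < 0)
        \<or> (almost_equal (g2 <# (?X - A)) A \<and> card_excess (g2 <# (?X - A)) A \<le> int C - int (nat (int C - v + 1)))"
      using translate by blast
    show ?thesis
    proof (cases "almost_equal (g2 <# A) A \<and> card_excess (g2 <# A) A < 0")
      case True
      then show ?thesis using g2(1) by force
    next
      case False
      then have h2: "almost_equal (g2 <# (?X - A)) A" "card_excess (g2 <# (?X - A)) A < v"
        using g2(2) by (auto split: if_split_asm)
      then show ?thesis
        using almost_equal_l_coset_mult[OF AX g1(1) g2(1) h1 h2(1)]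
          card_excess_l_coset_mult[OF AX g1(1) g2(1) h1 h2(1)] g1(1) g2(1)
        unfolding v_def by (intro bexI[of _ "g2 \<otimes> g1"]) auto
    qed
  qed
qed

definition level :: "'a \<Rightarrow> nat" where
  "level x = (LEAST n. x \<in> ball_subgroup (real n))"

lemma mem_ball_subgroup_level: "x \<in> carrier G \<Longrightarrow> x \<in> ball_subgroup (real (level x))"
proof -
  assume x: "x \<in> carrier G"
  have "d \<one> x \<le> real (nat \<lceil>d \<one> x\<rceil>)" by linarith
  then have "x \<in> ball_subgroup (real (nat \<lceil>d \<one> x\<rceil>))"
    unfolding ball_subgroup_def using x by (intro generate.incl) simp
  then show ?thesis unfolding level_def by (rule LeastI)
qed

lemma level_le: "x \<in> ball_subgroup (real n) \<Longrightarrow> level x \<le> n"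
  unfolding level_def by (rule Least_le)

lemma ball_subgroup_level_mono: "m \<le> n \<Longrightarrow> ball_subgroup (real m) \<subseteq> ball_subgroup (real n)"
  by (rule ball_subgroup_mono) simp

lemma level_mult:
  assumes h: "h \<in> carrier G" and x: "x \<in> carrier G" and less: "level h < level x"
  shows "level (x \<otimes> h) = level x"
proof (rule antisym)
  interpret K: subgroup "ball_subgroup (real (level x))" G by (rule subgroup_ball_subgroup)
  have "h \<in> ball_subgroup (real (level x))"
    using mem_ball_subgroup_level[OF h] ball_subgroup_level_mono[of "level h" "level x"] less by auto
  then show "level (x \<otimes> h) \<le> level x"
    using mem_ball_subgroup_level[OF x] by (intro level_le K.m_closed)
  define m where "m = max (level (x \<otimes> h)) (level h)"
  interpret M: subgroup "ball_subgroup (real m)" G by (rule subgroup_ball_subgroup)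
  have xh: "x \<otimes> h \<in> ball_subgroup (real m)"
    using mem_ball_subgroup_level[of "x \<otimes> h"] ball_subgroup_level_mono[of "level (x \<otimes> h)" m] x h
    unfolding m_def by auto
  have hm: "h \<in> ball_subgroup (real m)"
    using mem_ball_subgroup_level[OF h] ball_subgroup_level_mono[of "level h" m] unfolding m_def by auto
  have "(x \<otimes> h) \<otimes> inv h \<in> ball_subgroup (real m)"
    using M.m_closed[OF xh M.m_inv_closed[OF hm]] .
  then have "level x \<le> m" using x h by (simp add: m_assoc level_le)
  then show "level x \<le> level (x \<otimes> h)" using less unfolding m_def by simp
qed

lemma almost_invariant_level_set:
  assumes "\<And>r. finite (ball_subgroup r)"
  shows "almost_invariant G {x \<in> carrier G. level x \<in> S}"
  unfolding almost_invariant_iff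
proof (intro conjI ballI)
  fix h assume h: "h \<in> carrier G"
  have "jump_set G {x \<in> carrier G. level x \<in> S} h \<subseteq> ball_subgroup (real (level h))"
  proof
    fix x assume jump: "x \<in> jump_set G {x \<in> carrier G. level x \<in> S} h"
    then have x: "x \<in> carrier G" unfolding jump_set_def by blast
    show "x \<in> ball_subgroup (real (level h))"
    proof (rule ccontr)
      assume "x \<notin> ball_subgroup (real (level h))"
      then have "level h < level x"
        using mem_ball_subgroup_level[OF x] ball_subgroup_level_mono[of "level x" "level h"] by force
      then have "level (x \<otimes> h) = level x" by (rule level_mult[OF h x])
      then show False using jump x h unfolding jump_set_def by simp
    qed
  qed
  then show "finite (jump_set G {x \<in> carrier G. level x \<in> S} h)"
    using assms finite_subset by blast
qed auto

lemma at_least_three_ends_if_ball_subgroups_finite: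
  assumes fin: "\<And>r. finite (ball_subgroup r)" and inf: "infinite (carrier G)"
  shows "at_least_three_ends G"
proof -
  have "infinite (level ` carrier G)"
  proof
    assume "finite (level ` carrier G)"
    have "carrier G \<subseteq> ball_subgroup (real (Max (level ` carrier G)))"
    proof
      fix x assume x: "x \<in> carrier G"
      then have "level x \<le> Max (level ` carrier G)" using \<open>finite (level ` carrier G)\<close> by simp
      then show "x \<in> ball_subgroup (real (Max (level ` carrier G)))"
        using mem_ball_subgroup_level[OF x] ball_subgroup_level_mono by blast
    qed
    then show False using inf fin finite_subset by blast
  qed
  then obtain S1 S2 S3 where S: "S1 \<subseteq> level ` carrier G" "S2 \<subseteq> level ` carrier G" "S3 \<subseteq> level ` carrier G"
    "infinite S1" "infinite S2" "infinite S3" "S1 \<inter> S2 = {}" "S1 \<inter> S3 = {}" "S2 \<inter> S3 = {}"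
    by (rule infinite_nat_set_split3)
  define B where "B S = {x \<in> carrier G. level x \<in> S}" for S
  have "infinite (B S)" if "S \<subseteq> level ` carrier G" "infinite S" for S
  proof
    assume "finite (B S)"
    moreover have "S \<subseteq> level ` B S" using that(1) unfolding B_def by blast
    ultimately show False using that(2) finite_surj by blast
  qed
  moreover have "almost_invariant G (B S)" for S
    unfolding B_def using fin by (rule almost_invariant_level_set)
  moreover have "B S \<inter> B S' = {}" if "S \<inter> S' = {}" for S S'
    using that unfolding B_def by blast
  ultimately show ?thesis
    unfolding at_least_three_ends_def using S by (intro exI[of _ "B S1"] exI[of _ "B S2"] exI[of _ "B S3"]) simp
qed

theorem finitely_generated_and_virtually_cyclic_if_split:
  assumes three: "\<not> at_least_three_ends G"
    and A: "almost_invariant G A" "infinite A" "infinite (carrier G - A)"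
  shows "(\<exists>S. finite S \<and> S \<subseteq> carrier G \<and> generate G S = carrier G)
       \<and> (\<exists>a\<in>carrier G. infinite (generate G {a}) \<and> finite (rcosets (generate G {a})))"
proof (cases "\<exists>r. infinite (ball_subgroup r)")
  case True
  then obtain r where "infinite (ball_subgroup r)" by blast
  then obtain h where h: "h \<in> carrier G" "almost_equal (h <# A) A" "card_excess (h <# A) A \<noteq> 0"
    using exists_translate_card_excess_nonzero[OF three A] by blast
  interpret nonzero_flux G A "inv h"
    using A(1) h by unfold_locales simp_all
  show ?thesis by (rule finitely_generated_and_virtually_cyclic)
next
  case False
  moreover have "infinite (carrier G)"
    using A(2) almost_invariant_subset[OF A(1)] finite_subset by blast
  ultimately have "at_least_three_ends G"
    by (intro at_least_three_ends_if_ball_subgroups_finite) auto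
  with three show ?thesis by contradiction
qed

end

section \<open>Ends\<close>

lemma scale_chain_singleton: "scale_chain X d S [x] \<longleftrightarrow> x \<in> X"
  unfolding scale_chain_def by simp

lemma scale_chain_Cons_Cons:
  "scale_chain X d S (x # y # ys) \<longleftrightarrow> x \<in> X \<and>
     (\<exists>m. x \<notin> fst (S m) \<and> y \<notin> fst (S m) \<and> d x y \<le> real (snd (S m))) \<and> scale_chain X d S (y # ys)"
  unfolding scale_chain_def by (simp add: All_less_Suc2) blast

lemma scale_chain_ConsI:
  assumes "scale_chain X d S xs" "x \<in> X" "x \<notin> fst (S m)" "hd xs \<notin> fst (S m)"
    "d x (hd xs) \<le> real (snd (S m))"
  shows "scale_chain X d S (x # xs)"
proof -
  obtain y ys where "xs = y # ys" using assms(1) unfolding scale_chain_def by (cases xs) auto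
  then show ?thesis using assms by (auto simp: scale_chain_Cons_Cons)
qed

lemma scale_chain_hd_last_iff:
  assumes "scale_chain X d S xs"
    and step: "\<And>m x y. x \<in> X \<Longrightarrow> y \<in> X \<Longrightarrow> x \<notin> fst (S m) \<Longrightarrow> y \<notin> fst (S m) \<Longrightarrow>
      d x y \<le> real (snd (S m)) \<Longrightarrow> P x \<longleftrightarrow> P y"
  shows "P (hd xs) \<longleftrightarrow> P (last xs)"
  using assms(1)
proof (induction xs rule: induct_list012)
  case (3 x y ys)
  then obtain m where "x \<in> X" "x \<notin> fst (S m)" "y \<notin> fst (S m)" "d x y \<le> real (snd (S m))"
    "scale_chain X d S (y # ys)"
    by (auto simp: scale_chain_Cons_Cons)
  moreover from this have "y \<in> X" unfolding scale_chain_def by simp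
  ultimately show ?case using "3.IH"(2) step by simp
qed (simp_all add: scale_chain_def)

abbreviation CF_topology :: "'a set \<Rightarrow> ('a \<Rightarrow> 'a \<Rightarrow> real) \<Rightarrow> (('a \<Rightarrow> real) \<Rightarrow> real) topology" where
  "CF_topology X d \<equiv> product_topology (\<lambda>f. top_of_set {0..1::real}) (CGO X d)"

lemma ev_embed_in_topspace: "x \<in> X \<Longrightarrow> ev_embed (CGO X d) x \<in> topspace (CF_topology X d)"
  by (auto simp: ev_embed_def CGO_def)

lemma CF_subset_topspace: "CF X d \<subseteq> topspace (CF_topology X d)"
  unfolding CF_def by (rule closure_of_subset_topspace)

lemma openin_coordinate_preimage:
  assumes "f \<in> CGO X d" "open U"
  shows "openin (CF_topology X d) {p \<in> topspace (CF_topology X d). p f \<in> U}"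
proof -
  have "openin (top_of_set {0..1::real}) ({0..1} \<inter> U)"
    using assms(2) by (auto simp: openin_open)
  from openin_continuous_map_preimage[OF continuous_map_product_projection[OF assms(1)] this]
  have "openin (CF_topology X d) {p \<in> topspace (CF_topology X d). p f \<in> {0..1} \<inter> U}" by simp
  moreover have "{p \<in> topspace (CF_topology X d). p f \<in> {0..1} \<inter> U}
      = {p \<in> topspace (CF_topology X d). p f \<in> U}"
    using assms(1) by (auto simp: PiE_iff)
  ultimately show ?thesis by simp
qed

text \<open>An end lies in the closure of the embedded space but not in it, and finite sets are closed.\<close>
lemma infinite_coordinate_preimage_near_end:
  assumes z: "z \<in> ends_set X d" and f: "f \<in> CGO X d" and U: "open U" "z f \<in> U"
  shows "infinite {x \<in> X. f x \<in> U}"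
proof
  let ?ev = "ev_embed (CGO X d)" and ?tau = "CF_topology X d"
  assume "finite {x \<in> X. f x \<in> U}"
  moreover have "t1_space ?tau"
    by (simp add: t1_space_product_topology Hausdorff_imp_t1_space t1_space_subtopology)
  moreover have "?ev ` {x \<in> X. f x \<in> U} \<subseteq> topspace ?tau"
    using ev_embed_in_topspace[of _ X d] by blast
  ultimately have "closedin ?tau (?ev ` {x \<in> X. f x \<in> U})"
    unfolding t1_space_closedin_finite by blast
  define T where "T = {p \<in> topspace ?tau. p f \<in> U} - ?ev ` {x \<in> X. f x \<in> U}"
  have "openin ?tau T"
    unfolding T_def using openin_coordinate_preimage[OF f U(1)] \<open>closedin ?tau _\<close> by (rule openin_diff)
  moreover have "z \<in> T"
    using z U(2) CF_subset_topspace[of X d] unfolding T_def ends_set_def by auto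
  moreover have "z \<in> ?tau closure_of (?ev ` X)" using z unfolding ends_set_def CF_def by blast
  then have "\<forall>T. z \<in> T \<and> openin ?tau T \<longrightarrow> (\<exists>y. y \<in> ?ev ` X \<and> y \<in> T)"
    unfolding in_closure_of by blast
  ultimately obtain x where "x \<in> X" "?ev x \<in> T" by blast
  moreover have "?ev x f = f x" using f by (simp add: ev_embed_def)
  ultimately show False unfolding T_def by auto
qed

lemma derived_point_coordinate:
  assumes "z \<in> CF_topology X d derived_set_of (ev_embed (CGO X d) ` B)"
    and f: "f \<in> CGO X d" and U: "open U" "z f \<in> U"
  shows "\<exists>b\<in>B. ev_embed (CGO X d) b \<noteq> z \<and> f b \<in> U"
proof -
  define T where "T = {p \<in> topspace (CF_topology X d). p f \<in> U}"
  have "z \<in> T"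
    using derived_set_of_subset_topspace[of "CF_topology X d" "ev_embed (CGO X d) ` B"] assms(1) U(2)
    unfolding T_def by blast
  moreover have "openin (CF_topology X d) T"
    unfolding T_def using f U(1) by (rule openin_coordinate_preimage)
  moreover have "\<forall>T. z \<in> T \<and> openin (CF_topology X d) T \<longrightarrow>
      (\<exists>y. y \<noteq> z \<and> y \<in> ev_embed (CGO X d) ` B \<and> y \<in> T)"
    using assms(1) unfolding in_derived_set_of by blast
  ultimately obtain y where "y \<noteq> z" "y \<in> ev_embed (CGO X d) ` B" "y \<in> T"
    by blast
  then obtain b where "b \<in> B" "ev_embed (CGO X d) b \<noteq> z" "ev_embed (CGO X d) b f \<in> U"
    unfolding T_def by blast
  then show ?thesis using f by (auto simp: ev_embed_def)
qed

definition chain_reach :: "'a set \<Rightarrow> ('a \<Rightarrow> 'a \<Rightarrow> real) \<Rightarrow> (nat \<Rightarrow> 'a set \<times> nat) \<Rightarrow> 'a set \<Rightarrow> 'a set" where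
  "chain_reach X d S T = {x \<in> X. \<exists>xs. scale_chain X d S xs \<and> hd xs = x \<and> last xs \<in> T}"

lemma subset_chain_reach: "T \<subseteq> X \<Longrightarrow> T \<subseteq> chain_reach X d S T"
  unfolding chain_reach_def using scale_chain_singleton[of X d S] by fastforce

lemma chain_reach_Cons:
  assumes "y \<in> chain_reach X d S T" "x \<in> X" "x \<notin> fst (S m)" "y \<notin> fst (S m)"
    "d x y \<le> real (snd (S m))"
  shows "x \<in> chain_reach X d S T"
proof -
  obtain xs where xs: "scale_chain X d S xs" "hd xs = y" "last xs \<in> T"
    using assms(1) unfolding chain_reach_def by blast
  then have "xs \<noteq> []" unfolding scale_chain_def by blast
  have "scale_chain X d S (x # xs)"
    using xs assms by (intro scale_chain_ConsI[of _ _ _ xs x m]) auto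
  then show ?thesis using xs(3) \<open>xs \<noteq> []\<close> assms(2) unfolding chain_reach_def by auto
qed

lemma chain_reach_near:
  assumes "\<forall>xs. scale_chain X d S xs \<longrightarrow> \<bar>f (hd xs) - f (last xs)\<bar> < \<delta>" "x \<in> chain_reach X d S T"
  shows "\<exists>y\<in>T. \<bar>f x - f y\<bar> < \<delta>"
  using assms unfolding chain_reach_def by blast

context metric_group
begin

lemma mbounded_iff: "mbounded (carrier G) d K \<longleftrightarrow> finite K \<and> K \<subseteq> carrier G"
proof
  assume K: "mbounded (carrier G) d K"
  show "finite K \<and> K \<subseteq> carrier G"
  proof (cases "K = {}")
    case False
    then obtain x r where x: "x \<in> carrier G" and "\<forall>y\<in>K. d x y \<le> r" "K \<subseteq> carrier G"
      using K unfolding mbounded_def by blast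
    then have "K \<subseteq> {y \<in> carrier G. d x y \<le> r}" by blast
    then have "finite K" using finite_ball[OF x] by (rule finite_subset)
    with \<open>K \<subseteq> carrier G\<close> show ?thesis by simp
  qed simp
next
  assume K: "finite K \<and> K \<subseteq> carrier G"
  then have "\<forall>y\<in>K. d \<one> y \<le> Max (insert 0 (d \<one> ` K))" by simp
  then show "mbounded (carrier G) d K" unfolding mbounded_def using K by blast
qed

lemma mcontinuous_on_discrete: "mcontinuous_on (carrier G) d f"
  unfolding mcontinuous_on_def
proof (intro ballI allI impI)
  fix x :: 'a and \<epsilon> :: real assume x: "x \<in> carrier G" and "0 < \<epsilon>"
  define \<delta> where "\<delta> = Min (insert 1 (d x ` ({y \<in> carrier G. d x y \<le> 1} - {x})))"
  have fin: "finite ({y \<in> carrier G. d x y \<le> 1} - {x})" using finite_ball[OF x] by simp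
  have "0 < \<delta>"
    unfolding \<delta>_def
  proof (subst Min_gr_iff)
    show "\<forall>a\<in>insert 1 (d x ` ({y \<in> carrier G. d x y \<le> 1} - {x})). 0 < a"
      using dist_nonneg[OF x] dist_eq_0_iff[OF x] by (auto simp: less_le)
  qed (use fin in auto)
  moreover have "y = x" if "y \<in> carrier G" "d x y < \<delta>" for y
  proof (rule ccontr)
    assume "y \<noteq> x"
    with that have "\<delta> \<le> d x y" unfolding \<delta>_def using fin Min_le_iff by fastforce
    with that(2) show False by simp
  qed
  ultimately show "\<exists>\<delta>>0. \<forall>y\<in>carrier G. d x y < \<delta> \<longrightarrow> \<bar>f x - f y\<bar> < \<epsilon>"
    using \<open>0 < \<epsilon>\<close> by force
qed

lemma glacial_scale_ballsI:
  assumes "\<And>i. finite (K i)" "\<And>i. K i \<subseteq> carrier G" "\<And>i. {y \<in> carrier G. d \<one> y \<le> real i} \<subseteq> K i"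
  shows "glacial_scale (carrier G) d (\<lambda>i. (K i, i))"
  unfolding glacial_scale_def
proof (intro conjI allI impI)
  show "mbounded (carrier G) d (fst (K i, i))" for i using assms(1,2) by (simp add: mbounded_iff)
next
  fix K' and r :: real assume "mbounded (carrier G) d K' \<and> 0 < r"
  then have K': "finite K'" "K' \<subseteq> carrier G" by (simp_all add: mbounded_iff)
  define M where "M = Max (insert 0 (d \<one> ` K'))"
  define i where "i = nat \<lceil>max M r\<rceil> + 1"
  have i: "max M r < real i" unfolding i_def by linarith
  have "K' \<subseteq> {y \<in> carrier G. d \<one> y \<le> real i}"
  proof
    fix y assume "y \<in> K'"
    then have "d \<one> y \<le> M" using K' unfolding M_def by simp
    then show "y \<in> {y \<in> carrier G. d \<one> y \<le> real i}" using \<open>y \<in> K'\<close> K' i by auto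
  qed
  moreover have "r < real i" using i by simp
  ultimately show "\<exists>i. K' \<subseteq> fst (K i, i) \<and> r < real (snd (K i, i))"
    using assms(3) by (intro exI[of _ i]) auto
qed

definition char_fun :: "'a set \<Rightarrow> 'a \<Rightarrow> real" where
  "char_fun B = restrict (indicator B) (carrier G)"

lemma char_fun_apply: "x \<in> carrier G \<Longrightarrow> char_fun B x = indicator B x"
  unfolding char_fun_def by simp

lemma char_fun_in_CGO:
  assumes B: "almost_invariant G B"
  shows "char_fun B \<in> CGO (carrier G) d"
proof -
  define K where "K i = {y \<in> carrier G. d \<one> y \<le> real i}
      \<union> (\<Union>h\<in>{h \<in> carrier G. d \<one> h \<le> real i}. jump_set G B h)" for i :: nat
  have "finite (K i)" for i
    using finite_ball[of \<one>] B unfolding K_def almost_invariant_iff by auto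
  moreover have "K i \<subseteq> carrier G" for i unfolding K_def jump_set_def by blast
  ultimately have scale: "glacial_scale (carrier G) d (\<lambda>i. (K i, i))"
    by (rule glacial_scale_ballsI) (auto simp: K_def)
  have "char_fun B (hd xs) = char_fun B (last xs)" if "scale_chain (carrier G) d (\<lambda>i. (K i, i)) xs" for xs
  proof -
    have "hd xs \<in> B \<longleftrightarrow> last xs \<in> B"
    proof (rule scale_chain_hd_last_iff[OF that])
      fix m x y assume x: "x \<in> carrier G" "x \<notin> fst (K m, m)" and y: "y \<in> carrier G" "y \<notin> fst (K m, m)"
        and "d x y \<le> real (snd (K m, m))"
      moreover define h where "h = inv x \<otimes> y"
      ultimately have "h \<in> carrier G" "y = x \<otimes> h" "d \<one> h \<le> real m"
        using dist_mult_right[of x h] by (auto simp: m_assoc[symmetric])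
      then show "x \<in> B \<longleftrightarrow> y \<in> B" using x unfolding K_def jump_set_def by auto
    qed
    moreover have "hd xs \<in> carrier G" "last xs \<in> carrier G"
      using that unfolding scale_chain_def by auto
    ultimately show ?thesis by (simp add: char_fun_apply indicator_def)
  qed
  then have "glacially_oscillating (carrier G) d (char_fun B)"
    unfolding glacially_oscillating_def using scale by auto
  moreover have "char_fun B \<in> extensional (carrier G)" "char_fun B ` carrier G \<subseteq> {0..1}"
    unfolding char_fun_def by (auto simp: indicator_def)
  ultimately show ?thesis unfolding CGO_def using mcontinuous_on_discrete by blast
qed

lemma ev_embed_inj:
  assumes "x \<in> carrier G" "y \<in> carrier G" "ev_embed (CGO (carrier G) d) x = ev_embed (CGO (carrier G) d) y"
  shows "x = y"
proof -
  have f: "char_fun {x} \<in> CGO (carrier G) d"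
    using assms(1) by (intro char_fun_in_CGO almost_invariant_finite) auto
  then have "char_fun {x} x = char_fun {x} y" using assms(3) unfolding ev_embed_def by (metis restrict_apply')
  then show ?thesis using assms(1,2) by (simp add: char_fun_apply indicator_def split: if_splits)
qed

lemma derived_set_ev_embed_nonempty:
  assumes BX: "B \<subseteq> carrier G" and "infinite B"
  shows "CF_topology (carrier G) d derived_set_of (ev_embed (CGO (carrier G) d) ` B) \<noteq> {}"
proof -
  let ?ev = "ev_embed (CGO (carrier G) d)" and ?tau = "CF_topology (carrier G) d"
  have "compact_space ?tau"
    unfolding compact_space_product_topology
    by (simp add: compact_space_subtopology compactin_euclidean_iff)
  moreover have "infinite (?ev ` B)"
  proof -
    have "inj_on ?ev B"
    proof (rule inj_onI)
      fix x y assume "x \<in> B" "y \<in> B" "?ev x = ?ev y"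
      then show "x = y" using BX by (intro ev_embed_inj) auto
    qed
    then show ?thesis using assms(2) by (simp add: finite_image_iff)
  qed
  moreover have "?ev ` B \<subseteq> topspace ?tau" using BX ev_embed_in_topspace[of _ "carrier G" d] by auto
  ultimately show ?thesis by (rule compact_space_imp_Bolzano_Weierstrass)
qed

lemma derived_point_in_ends:
  assumes BX: "B \<subseteq> carrier G"
    and z: "z \<in> CF_topology (carrier G) d derived_set_of (ev_embed (CGO (carrier G) d) ` B)"
  shows "z \<in> ends_set (carrier G) d"
proof -
  let ?ev = "ev_embed (CGO (carrier G) d)"
  have "z \<in> CF (carrier G) d"
    unfolding CF_def
    using subsetD[OF closure_of_mono[OF image_mono[OF BX]] subsetD[OF derived_set_of_subset_closure_of z]] .
  moreover have "z \<notin> ?ev ` carrier G"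
  proof
    assume "z \<in> ?ev ` carrier G"
    then obtain x where x: "x \<in> carrier G" "z = ?ev x" by blast
    have f: "char_fun {x} \<in> CGO (carrier G) d"
      using x(1) by (intro char_fun_in_CGO almost_invariant_finite) auto
    then have "z (char_fun {x}) \<in> {1/2<..}" using x by (simp add: ev_embed_def char_fun_apply)
    then obtain b where "b \<in> B" "?ev b \<noteq> z" "char_fun {x} b \<in> {1/2<..}"
      using derived_point_coordinate[OF z f open_greaterThan] by blast
    moreover from this have "b \<in> carrier G" using BX by blast
    ultimately show False using x by (cases "b = x") (auto simp: char_fun_apply)
  qed
  ultimately show ?thesis unfolding ends_set_def by blast
qed

text \<open>The end is a limit point of \<open>B\<close>, which exists by compactness.\<close>
lemma end_of_infinite_almost_invariant:
  assumes B: "almost_invariant G B" "infinite B"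
  shows "\<exists>z\<in>ends_set (carrier G) d. z (char_fun B) = 1
           \<and> (\<forall>C. almost_invariant G C \<and> C \<inter> B = {} \<longrightarrow> z (char_fun C) = 0)"
proof -
  have BX: "B \<subseteq> carrier G" using B(1) by (rule almost_invariant_subset)
  then obtain z where z: "z \<in> CF_topology (carrier G) d derived_set_of (ev_embed (CGO (carrier G) d) ` B)"
    using derived_set_ev_embed_nonempty[OF BX B(2)] by blast
  have "z (char_fun B) = 1"
  proof (rule ccontr)
    assume "z (char_fun B) \<noteq> 1"
    moreover have "open (- {1 :: real})" by (intro open_Compl closed_singleton)
    ultimately obtain b where "b \<in> B" "char_fun B b \<in> - {1}"
      using derived_point_coordinate[OF z char_fun_in_CGO[OF B(1)], of "- {1}"] by blast
    moreover from this have "b \<in> carrier G" using BX by blast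
    ultimately show False by (auto simp: char_fun_apply indicator_def split: if_splits)
  qed
  moreover have "z (char_fun C) = 0" if C: "almost_invariant G C" "C \<inter> B = {}" for C
  proof (rule ccontr)
    assume "z (char_fun C) \<noteq> 0"
    moreover have "open (- {0 :: real})" by (intro open_Compl closed_singleton)
    ultimately obtain b where "b \<in> B" "char_fun C b \<in> - {0}"
      using derived_point_coordinate[OF z char_fun_in_CGO[OF C(1)], of "- {0}"] by blast
    moreover from this have "b \<in> carrier G" using BX by blast
    ultimately show False using C(2) by (auto simp: char_fun_apply indicator_def split: if_splits)
  qed
  ultimately show ?thesis using derived_point_in_ends[OF BX z] by blast
qed

lemma three_le_card_ends:
  assumes "at_least_three_ends G" "finite (ends_set (carrier G) d)"
  shows "3 \<le> card (ends_set (carrier G) d)"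
proof -
  obtain A1 A2 A3 where A: "almost_invariant G A1" "almost_invariant G A2" "almost_invariant G A3"
    "infinite A1" "infinite A2" "infinite A3" "A1 \<inter> A2 = {}" "A1 \<inter> A3 = {}" "A2 \<inter> A3 = {}"
    using assms(1) unfolding at_least_three_ends_def by blast
  obtain z1 z2 z3 where z: "z1 \<in> ends_set (carrier G) d" "z2 \<in> ends_set (carrier G) d" "z3 \<in> ends_set (carrier G) d"
    and "z1 (char_fun A1) = 1" "z2 (char_fun A2) = 1" "z3 (char_fun A3) = 1"
    and "z2 (char_fun A1) = 0" "z3 (char_fun A1) = 0" "z3 (char_fun A2) = 0"
    using end_of_infinite_almost_invariant[OF A(1,4)] end_of_infinite_almost_invariant[OF A(2,5)]
      end_of_infinite_almost_invariant[OF A(3,6)] A(1,2,7,8,9) by (metis inf_commute)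
  then have "z1 \<noteq> z2" "z1 \<noteq> z3" "z2 \<noteq> z3" by (metis zero_neq_one)+
  then have "card {z1, z2, z3} = 3" by simp
  moreover have "card {z1, z2, z3} \<le> card (ends_set (carrier G) d)"
    using z assms(2) by (intro card_mono) auto
  ultimately show ?thesis by simp
qed

lemma almost_invariant_chain_reach:
  assumes S: "glacial_scale (carrier G) d S"
  shows "almost_invariant G (chain_reach (carrier G) d S T)"
  unfolding almost_invariant_iff
proof (intro conjI ballI)
  let ?A = "chain_reach (carrier G) d S T"
  show "?A \<subseteq> carrier G" unfolding chain_reach_def by blast
  fix h assume h: "h \<in> carrier G"
  have "mbounded (carrier G) d {} \<and> 0 < \<bar>d \<one> h\<bar> + 1 \<longrightarrow>
      (\<exists>i. {} \<subseteq> fst (S i) \<and> \<bar>d \<one> h\<bar> + 1 < real (snd (S i)))"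
    using S unfolding glacial_scale_def by blast
  then obtain i where "\<bar>d \<one> h\<bar> + 1 < real (snd (S i))" by (auto simp: mbounded_iff)
  then have i: "d \<one> h < real (snd (S i))" by linarith
  define K where "K = fst (S i)"
  have "finite K" using S unfolding glacial_scale_def K_def by (simp add: mbounded_iff)
  have "jump_set G ?A h \<subseteq> K \<union> (\<lambda>y. y \<otimes> inv h) ` K"
  proof
    fix x assume x: "x \<in> jump_set G ?A h"
    then have xX: "x \<in> carrier G" "x \<otimes> h \<in> carrier G" using h unfolding jump_set_def by auto
    show "x \<in> K \<union> (\<lambda>y. y \<otimes> inv h) ` K"
    proof (rule ccontr)
      assume "x \<notin> K \<union> (\<lambda>y. y \<otimes> inv h) ` K"
      moreover have "x = (x \<otimes> h) \<otimes> inv h" using xX h by (simp add: m_assoc)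
      ultimately have out: "x \<notin> fst (S i)" "x \<otimes> h \<notin> fst (S i)" unfolding K_def by auto
      have near: "d x (x \<otimes> h) \<le> real (snd (S i))" "d (x \<otimes> h) x \<le> real (snd (S i))"
        using dist_mult_right[OF xX(1) h] dist_commute[OF xX] i by auto
      have "x \<in> ?A \<longleftrightarrow> x \<otimes> h \<in> ?A"
        using chain_reach_Cons[of x _ _ S T "x \<otimes> h" i] chain_reach_Cons[of "x \<otimes> h" _ _ S T x i]
          xX out near by blast
      then show False using x unfolding jump_set_def by blast
    qed
  qed
  then show "finite (jump_set G ?A h)" using \<open>finite K\<close> by (meson finite_UnI finite_imageI finite_subset)
qed

text \<open>A function separating two ends oscillates by less than a third of the gap along chains;
  the points that chain-connect to where it is high form the required set.\<close>
lemma almost_invariant_split_if_two_ends: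
  assumes "p \<in> ends_set (carrier G) d" "q \<in> ends_set (carrier G) d" "p \<noteq> q"
  shows "\<exists>A. almost_invariant G A \<and> infinite A \<and> infinite (carrier G - A)"
proof -
  have "p \<in> (\<Pi>\<^sub>E f\<in>CGO (carrier G) d. {0..1})" "q \<in> (\<Pi>\<^sub>E f\<in>CGO (carrier G) d. {0..1})"
    using assms(1,2) CF_subset_topspace unfolding ends_set_def by auto
  then obtain f where f: "f \<in> CGO (carrier G) d" "p f \<noteq> q f"
    using assms(3) PiE_ext by metis
  obtain lo hi where ends: "lo \<in> ends_set (carrier G) d" "hi \<in> ends_set (carrier G) d" and "lo f < hi f"
    using assms(1,2) f(2) by (metis linorder_neq_iff)
  define \<delta> where "\<delta> = (hi f - lo f) / 3"
  have "0 < \<delta>" unfolding \<delta>_def using \<open>lo f < hi f\<close> by simp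
  then obtain S where S: "glacial_scale (carrier G) d S"
    and osc: "\<forall>xs. scale_chain (carrier G) d S xs \<longrightarrow> \<bar>f (hd xs) - f (last xs)\<bar> < \<delta>"
    using f(1) unfolding CGO_def glacially_oscillating_def by blast
  define A where "A = chain_reach (carrier G) d S {y \<in> carrier G. hi f - \<delta> \<le> f y}"
  have "{y \<in> carrier G. hi f - \<delta> \<le> f y} \<subseteq> A" unfolding A_def by (rule subset_chain_reach) blast
  then have "{x \<in> carrier G. f x \<in> {hi f - \<delta><..}} \<subseteq> A" by auto
  moreover have "infinite {x \<in> carrier G. f x \<in> {hi f - \<delta><..}}"
    using \<open>0 < \<delta>\<close> by (intro infinite_coordinate_preimage_near_end[OF ends(2) f(1)]) auto
  moreover have "{x \<in> carrier G. f x \<in> {..<lo f + \<delta>}} \<subseteq> carrier G - A"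
  proof
    fix x assume x: "x \<in> {x \<in> carrier G. f x \<in> {..<lo f + \<delta>}}"
    have "x \<notin> A"
    proof
      assume "x \<in> A"
      then obtain y where "hi f - \<delta> \<le> f y" "\<bar>f x - f y\<bar> < \<delta>"
        using chain_reach_near[OF osc] unfolding A_def by blast
      moreover have "hi f - lo f = 3 * \<delta>" unfolding \<delta>_def by simp
      ultimately show False using x unfolding abs_less_iff by simp
    qed
    then show "x \<in> carrier G - A" using x by blast
  qed
  moreover have "infinite {x \<in> carrier G. f x \<in> {..<lo f + \<delta>}}"
    using \<open>0 < \<delta>\<close> by (intro infinite_coordinate_preimage_near_end[OF ends(1) f(1)]) auto
  moreover have "almost_invariant G A" unfolding A_def using S by (rule almost_invariant_chain_reach)
  ultimately show ?thesis by (meson finite_subset)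
qed

end

theorem theorem5p12:
  fixes G :: "('a, 'b) monoid_scheme" and d :: "'a \<Rightarrow> 'a \<Rightarrow> real"
  assumes "group G"
    and "countable (carrier G)"
    and "proper_metric_on (carrier G) d"
    and "left_invariant_metric G d"
    and "card (ends_set (carrier G) d) = 2"
  shows "(\<exists>S. finite S \<and> S \<subseteq> carrier G \<and> generate G S = carrier G)
       \<and> (\<exists>a\<in>carrier G. infinite (generate G {a}) \<and> finite (rcosets\<^bsub>G\<^esub> (generate G {a})))"
proof -
  interpret metric_group G d
    using assms(1,3,4) by (simp add: metric_group_def metric_group_axioms_def)
  obtain p q where ends: "ends_set (carrier G) d = {p, q}" "p \<noteq> q"
    using assms(5) unfolding card_2_iff by blast
  then obtain A where A: "almost_invariant G A" "infinite A" "infinite (carrier G - A)"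
    using almost_invariant_split_if_two_ends[of p q] by blast
  have "\<not> at_least_three_ends G"
  proof
    assume "at_least_three_ends G"
    then have "3 \<le> card (ends_set (carrier G) d)" using ends(1) by (intro three_le_card_ends) simp_all
    with assms(5) show False by simp
  qed
  then show ?thesis using A by (rule finitely_generated_and_virtually_cyclic_if_split)
qed

end
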